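(* Let $n\ge2$ and $x=(s_1,\dots,s_{n-1},p)\in\mathbb C^n$. The following are equivalent ("for all $j$" means for all $j=1,\dots,[n/2]$): (1) $x\in\mathbb G_n$; (2) $K(x)$ holds and $\binom{n}{j}-s_jz-s_{n-j}w+\binom{n}{j}pzw\ne0$ for all $z,w\in\overline{\mathbb D}$ and all $j$; (3) $K(x)$ holds and for all $j$: $\|\Phi_j(\cdot,x)\|_{H^\infty}<1$, and if $s_js_{n-j}=\binom{n}{j}^2p$ then in addition $|s_{n-j}|<\binom{n}{j}$; (3') $K(x)$ holds and for all $j$: $\|\Phi_{n-j}(\cdot,x)\|_{H^\infty}<1$, and if $s_js_{n-j}=\binom{n}{j}^2p$ then in addition $|s_j|<\binom{n}{j}$; (4) $K(x)$ holds and $\binom{n}{j}|s_j-\bar s_{n-j}p|+|s_js_{n-j}-\binom{n}{j}^2p|<\binom{n}{j}^2-|s_{n-j}|^2$ for all $j$; (4') $K(x)$ holds and $\binom{n}{j}|s_{n-j}-\bar s_{j}p|+|s_js_{n-j}-\binom{n}{j}^2p|<\binom{n}{j}^2-|s_{j}|^2$ for all $j$; (5) $K(x)$ holds and for all $j$: $|s_j|^2-|s_{n-j}|^2+\binom{n}{j}^2|p|^2+2\binom{n}{j}|s_{n-j}-\bar s_jp|<\binom{n}{j}^2$ and $|s_{n-j}|<\binom{n}{j}$; (5') $K(x)$ holds and for all $j$: $|s_{n-j}|^2-|s_{j}|^2+\binom{n}{j}^2|p|^2+2\binom{n}{j}|s_{j}-\bar s_{n-j}p|<\binom{n}{j}^2$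 and $|s_{j}|<\binom{n}{j}$; (6) $K(x)$ holds, $|p|<1$ and $|s_j|^2+|s_{n-j}|^2-\binom{n}{j}^2|p|^2+2|s_js_{n-j}-\binom{n}{j}^2p|<\binom{n}{j}^2$ for all $j$; (7) $K(x)$ holds and $|s_{n-j}-\bar s_jp|+|s_j-\bar s_{n-j}p|<\binom{n}{j}(1-|p|^2)$ for all $j$; (8) $K(x)$ holds and there are $2\times2$ matrices $B_1,\dots,B_{[n/2]}$ with $\|B_j\|<1$, $s_j=\binom{n}{j}[B_j]_{11}$, $s_{n-j}=\binom{n}{j}[B_j]_{22}$ for all $j$, and $\det B_1=\dots=\det B_{[n/2]}=p$; (9) as (8) but with the $B_j$ symmetric.
   Context: $\mathbb D$ is the open unit disc; $\|\cdot\|$ operator norm. For $m\ge1$, $\mathbb G_m=\pi_m(\mathbb D^m)$ where $\pi_m(z)=(s_1(z),\dots,s_{m-1}(z),z_1\cdots z_m)$ with $s_i$ the elementary symmetric polynomials ($\mathbb G_1=\mathbb D$). For $x=(s_1,\dots,s_{n-1},p)$, $K(x)$ is the statement: $|p|\neq1$ and $\left(\frac{s_1-\bar s_{n-1}p}{1-|p|^2},\frac{s_2-\bar s_{n-2}p}{1-|p|^2},\dots,\frac{s_{n-1}-\bar s_1p}{1-|p|^2}\right)\in\mathbb G_{n-1}$. For $z\in\mathbb C$, $y=(y_1,\dots,y_{n-1},q)\in\mathbb C^n$, $j\in\{1,\dots,n-1\}$: $\Phi_j(z,y)=\dfrac{\binom{n}{j}qz-y_j}{y_{n-j}z-\binom{n}{j}}$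 if $y_{n-j}z\ne\binom{n}{j}$ and $y_jy_{n-j}\ne\binom{n}{j}^2q$, and $\Phi_j(z,y)=y_j/\binom{n}{j}$ if $y_jy_{n-j}=\binom{n}{j}^2q$; $\|\Phi_j(\cdot,y)\|_{H^\infty}=\sup_{z\in\mathbb D}|\Phi_j(z,y)|$ ($+\infty$ if undefined somewhere on $\mathbb D$ or unbounded). *)

theory Defs
  imports "HOL-Analysis.Analysis"
begin

definition esym :: "nat \<Rightarrow> (nat \<Rightarrow> complex) \<Rightarrow> nat \<Rightarrow> complex" where
  "esym m z k = (\<Sum>S\<in>{S. S \<subseteq> {..<m} \<and> card S = k}. \<Prod>i\<in>S. z i)"

text \<open>Membership of (s_1,...,s_{m-1},p) in the symmetrized polydisc G_m = pi_m(D^m).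
  Only the values s 1, ..., s (m-1) are relevant.\<close>
definition in_G :: "nat \<Rightarrow> (nat \<Rightarrow> complex) \<Rightarrow> complex \<Rightarrow> bool" where
  "in_G m s p \<longleftrightarrow> (\<exists>z. (\<forall>i<m. z i \<in> ball 0 1) \<and>
      (\<forall>k\<in>{1..m-1}. s k = esym m z k) \<and> p = (\<Prod>i<m. z i))"

definition condK :: "nat \<Rightarrow> (nat \<Rightarrow> complex) \<Rightarrow> complex \<Rightarrow> bool" where
  "condK n s p \<longleftrightarrow> cmod p \<noteq> 1 \<and>
     in_G (n-1) (\<lambda>k. (s k - cnj (s (n-k)) * p) / (1 - complex_of_real ((cmod p)\<^sup>2)))
                ((s (n-1) - cnj (s 1) * p) / (1 - complex_of_real ((cmod p)\<^sup>2)))"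

definition Phi_defined :: "nat \<Rightarrow> nat \<Rightarrow> complex \<Rightarrow> (nat \<Rightarrow> complex) \<Rightarrow> complex \<Rightarrow> bool" where
  "Phi_defined n j z y q \<longleftrightarrow>
     (y (n-j) * z \<noteq> of_nat (n choose j) \<and> y j * y (n-j) \<noteq> (of_nat (n choose j))\<^sup>2 * q)
     \<or> y j * y (n-j) = (of_nat (n choose j))\<^sup>2 * q"

definition Phi :: "nat \<Rightarrow> nat \<Rightarrow> complex \<Rightarrow> (nat \<Rightarrow> complex) \<Rightarrow> complex \<Rightarrow> complex" where
  "Phi n j z y q =
     (if y j * y (n-j) = (of_nat (n choose j))\<^sup>2 * q then y j / of_nat (n choose j)
      else (of_nat (n choose j) * q * z - y j) / (y (n-j) * z - of_nat (n choose j)))"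

definition Phi_Hinf :: "nat \<Rightarrow> nat \<Rightarrow> (nat \<Rightarrow> complex) \<Rightarrow> complex \<Rightarrow> ereal" where
  "Phi_Hinf n j y q =
     (if \<forall>z\<in>ball 0 1. Phi_defined n j z y q
      then (SUP z\<in>ball 0 1. ereal (cmod (Phi n j z y q))) else \<infinity>)"

definition mat_opnorm :: "complex^2^2 \<Rightarrow> real" where
  "mat_opnorm B = onorm (\<lambda>v::complex^2. B *v v)"

end

(*
  A point (s_1, ..., s_{n-1}, p) lies in G_n iff the polynomial
  x^n - s_1 x^(n-1) + ... + (-1)^n p has all its roots in the open unit disc.  One step of
  the Schur-Cohn test replaces it by a polynomial of degree n - 1 whose coefficients are the
  coordinates occurring in K(x); hence the point lies in G_n iff K(x) holds and |p| < 1.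
  Given K(x) and |p| < 1, the bound |e_k(w)| < binom(n-1, k) for w in the polydisc together with
  binom(n-1, j) + binom(n-1, n-j) = binom(n, j) yields condition (7) for every j, and (7)
  for j = 1 forces |p| < 1.

  After dividing s_j and s_{n-j} by binom(n, j), each of the conditions (2)-(9) for a fixed j
  becomes a characterisation of the tetrablock of Abouhajar, White and Young.  These are proved
  directly: nonvanishing of 1 - a z - b w + p z w reduces to positivity of a real quadratic in
  |w| on [0, 1]; conditions (4)-(7) are compared through the identities relating
  |a - conj b p|, |b - conj a p| and |a b - p|; and the matrix conditions follow from the
  identity 1 - a z - b w + det B z w = det (I - B diag(z, w)) together with an explicit
  symmetric 2x2 contraction.
*)
theory Submission
  imports Defs "HOL-Computational_Algebra.Fundamental_Theorem_Algebra"
begin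

section \<open>Characterisations of the tetrablock\<close>

lemma quadratic_pos_on_unit_interval_iff:
  fixes A D B :: real
  assumes "0 \<le> B" and "A * D \<le> B\<^sup>2"
  shows "(\<forall>r. 0 \<le> r \<longrightarrow> r \<le> 1 \<longrightarrow> 0 < A + D * r\<^sup>2 - 2 * B * r) \<longleftrightarrow> B < A \<and> 2 * B < A + D"
proof
  assume q: "\<forall>r. 0 \<le> r \<longrightarrow> r \<le> 1 \<longrightarrow> 0 < A + D * r\<^sup>2 - 2 * B * r"
  have "0 < A" and "2 * B < A + D"
    using q[rule_format, of 0] q[rule_format, of 1] by simp_all
  moreover have "B < A"
  proof (rule ccontr)
    assume "\<not> B < A"
    with \<open>0 < A\<close> have "0 < B" and r: "0 \<le> A / B" "A / B \<le> 1" by auto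
    have "(A + D * (A / B)\<^sup>2 - 2 * B * (A / B)) * B\<^sup>2 = A * (A * D - B\<^sup>2)"
      using \<open>0 < B\<close> by (simp add: field_simps power2_eq_square)
    also have "\<dots> \<le> 0"
      using \<open>0 < A\<close> assms(2) by (simp add: mult_nonneg_nonpos)
    finally show False
      using q[rule_format, OF r] \<open>0 < B\<close> by (simp add: mult_le_0_iff)
  qed
  ultimately show "B < A \<and> 2 * B < A + D" by simp
next
  assume crit: "B < A \<and> 2 * B < A + D"
  show "\<forall>r. 0 \<le> r \<longrightarrow> r \<le> 1 \<longrightarrow> 0 < A + D * r\<^sup>2 - 2 * B * r"
  proof (intro allI impI)
    fix r :: real
    assume r: "0 \<le> r" "r \<le> 1"
    have split: "A + D * r\<^sup>2 - 2 * B * r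
        = (1 - r)\<^sup>2 * A + 2 * r * (1 - r) * (A - B) + r\<^sup>2 * (A + D - 2 * B)"
      by (simp add: power2_eq_square algebra_simps)
    have "0 \<le> 2 * r * (1 - r) * (A - B)" using r crit by simp
    moreover have "0 < (1 - r)\<^sup>2 * A + r\<^sup>2 * (A + D - 2 * B)"
    proof (cases "r = 1")
      case False
      then have "0 < (1 - r)\<^sup>2 * A" using r crit assms(1) by simp
      moreover have "0 \<le> r\<^sup>2 * (A + D - 2 * B)" using crit by simp
      ultimately show ?thesis by linarith
    qed (use crit in simp)
    ultimately show "0 < A + D * r\<^sup>2 - 2 * B * r" unfolding split by linarith
  qed
qed

lemma add_lt_iff_quadratic_crit:
  fixes A D B m :: real
  assumes "0 \<le> B" "0 \<le> m" and sq: "B\<^sup>2 = m\<^sup>2 + A * D"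
  shows "B + m < A \<longleftrightarrow> B < A \<and> 2 * B < A + D"
proof -
  have gap: "(A - B)\<^sup>2 - m\<^sup>2 = A * (A + D - 2 * B)"
    using sq by (simp add: power2_eq_square algebra_simps)
  show ?thesis
  proof
    assume "B + m < A"
    then have "B < A" "m\<^sup>2 < (A - B)\<^sup>2"
      using assms by (auto intro: power_strict_mono)
    moreover from this have "0 < A * (A + D - 2 * B)" "0 < A"
      using gap \<open>0 \<le> B\<close> by linarith+
    ultimately show "B < A \<and> 2 * B < A + D"
      by (simp add: zero_less_mult_iff)
  next
    assume crit: "B < A \<and> 2 * B < A + D"
    then have "0 < A * (A + D - 2 * B)"
      using \<open>0 \<le> B\<close> by simp
    then have "m\<^sup>2 < (A - B)\<^sup>2" and "0 \<le> A - B"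
      using gap crit by linarith+
    then show "B + m < A"
      using power_less_imp_less_base by fastforce
  qed
qed

lemma norm_diff_cnj_mult_sq:
  "(cmod (a - cnj b * p))\<^sup>2 = (cmod (a * b - p))\<^sup>2 + (1 - (cmod b)\<^sup>2) * ((cmod a)\<^sup>2 - (cmod p)\<^sup>2)"
  unfolding cmod_power2 by (simp add: algebra_simps power2_eq_square)

lemma norm_one_minus_sq_diff:
  "(cmod (1 - a * w))\<^sup>2 - (cmod (b - p * w))\<^sup>2
     = (1 - (cmod b)\<^sup>2) + ((cmod a)\<^sup>2 - (cmod p)\<^sup>2) * (cmod w)\<^sup>2 - 2 * Re ((a - cnj b * p) * w)"
  unfolding cmod_power2 by (simp add: algebra_simps power2_eq_square)

(* Below x, y, r, B, G, m stand for |a|, |b|, |p|, |a - conj b p|, |b - conj a p|, |a b - p|,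
   which are linked by the identity above. *)
lemma real_ineq_7_imp_6:
  fixes x y r B G m :: real
  assumes "0 \<le> x" "0 \<le> y" "0 \<le> r" "0 \<le> B" "0 \<le> G" "0 \<le> m"
    and B: "B\<^sup>2 = m\<^sup>2 + (1 - y\<^sup>2) * (x\<^sup>2 - r\<^sup>2)"
    and G: "G\<^sup>2 = m\<^sup>2 + (1 - x\<^sup>2) * (y\<^sup>2 - r\<^sup>2)"
    and xB: "\<bar>x - y * r\<bar> \<le> B" and yG: "\<bar>y - x * r\<bar> \<le> G"
    and T: "B + G < 1 - r\<^sup>2"
  shows "r < 1" "2 * m < 1 - x\<^sup>2 - y\<^sup>2 + r\<^sup>2"
proof -
  define u where "u = 1 - r\<^sup>2"
  define X where "X = 1 - x\<^sup>2 - y\<^sup>2 + r\<^sup>2"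
  have "0 < u" using T assms(4,5) unfolding u_def by linarith
  then show "r < 1"
    unfolding u_def using assms(3) power_less_imp_less_base[of r 2 1] by simp
  have "x - y * r \<le> B" "y * r - x \<le> B" "y - x * r \<le> G" "x * r - y \<le> G"
    using xB yG by (simp_all add: abs_le_iff)
  moreover have "(x + y) * (1 - r) = (x - y * r) + (y - x * r)"
    "(x - y) * (1 + r) = (x - y * r) + (x * r - y)" "(y - x) * (1 + r) = (y - x * r) + (y * r - x)"
    by (simp_all add: algebra_simps)
  moreover have "B + G < (1 + r) * (1 - r)" "B + G < (1 - r) * (1 + r)"
    using T by (simp_all add: algebra_simps power2_eq_square)
  ultimately have "(x + y) * (1 - r) < (1 + r) * (1 - r)"
    "(x - y) * (1 + r) < (1 - r) * (1 + r)" "(y - x) * (1 + r) < (1 - r) * (1 + r)"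
    by simp_all
  then have "x + y < 1 + r" "\<bar>x - y\<bar> < 1 - r"
    using \<open>r < 1\<close> assms(3) by (auto dest!: mult_right_less_imp_less)
  then have "(x + y)\<^sup>2 < (1 + r)\<^sup>2" "(x - y)\<^sup>2 < (1 - r)\<^sup>2"
    using assms(1,2) power_strict_mono[of "\<bar>x - y\<bar>" "1 - r" 2] by (auto intro!: power_strict_mono)
  then have "0 < X" unfolding X_def by (simp add: power2_eq_square algebra_simps)
  have "(B + G)\<^sup>2 < u\<^sup>2" "(B - G)\<^sup>2 < u\<^sup>2"
    using T assms(4,5) power_strict_mono[of "\<bar>B - G\<bar>" u 2] unfolding u_def
    by (auto intro!: power_strict_mono)
  then have "0 < (u\<^sup>2 - (B + G)\<^sup>2) * (u\<^sup>2 - (B - G)\<^sup>2)" by simp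
  also have "\<dots> = u\<^sup>2 * (X\<^sup>2 - (2 * m)\<^sup>2)"
    unfolding u_def X_def using B G by algebra
  finally have "(2 * m)\<^sup>2 < X\<^sup>2"
    by (simp add: zero_less_mult_iff)
  then show "2 * m < 1 - x\<^sup>2 - y\<^sup>2 + r\<^sup>2"
    using \<open>0 < X\<close> power_less_imp_less_base unfolding X_def by fastforce
qed

lemma real_ineq_5_imp_lt:
  fixes x y r G :: real
  assumes "0 \<le> x" "0 \<le> y" "0 \<le> r" "\<bar>y - x * r\<bar> \<le> G"
    and h5: "x\<^sup>2 - y\<^sup>2 + r\<^sup>2 + 2 * G < 1" and "y < 1"
  shows "G < 1 - r\<^sup>2"
proof (rule ccontr)
  assume "\<not> G < 1 - r\<^sup>2"
  then have big: "1 - r\<^sup>2 < y\<^sup>2 - x\<^sup>2"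
    using h5 by linarith
  have "(1 + y)\<^sup>2 - (x + r)\<^sup>2 = (1 - x\<^sup>2 + y\<^sup>2 - r\<^sup>2) + 2 * (y - x * r)"
    "(1 - y)\<^sup>2 - (x - r)\<^sup>2 = (1 - x\<^sup>2 + y\<^sup>2 - r\<^sup>2) - 2 * (y - x * r)"
    by (simp_all add: power2_eq_square algebra_simps)
  moreover have "x * r - y \<le> G" "y - x * r \<le> G"
    using assms(4) by (simp_all add: abs_le_iff)
  ultimately have "(x + r)\<^sup>2 < (1 + y)\<^sup>2" "\<bar>x - r\<bar>\<^sup>2 < (1 - y)\<^sup>2"
    using h5 by simp_all
  then have "x + r < 1 + y" "\<bar>x - r\<bar> < 1 - y"
    using \<open>y < 1\<close> assms(2) power_less_imp_less_base by fastforce+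
  have "y\<^sup>2 < 1"
    using \<open>y < 1\<close> assms(2) by (simp add: power_less_one_iff abs_square_less_1)
  with big have "x\<^sup>2 < r\<^sup>2" by linarith
  then have "x < r" using assms(3) power_less_imp_less_base by blast
  then have "y - x < 1 - r" "y + x < 1 + r" "0 \<le> y + x" "r < 1"
    using \<open>x + r < 1 + y\<close> \<open>\<bar>x - r\<bar> < 1 - y\<close> \<open>y < 1\<close> assms(1,2) by auto
  then have "(y - x) * (y + x) \<le> (1 - r) * (1 + r)"
    by (cases "y - x \<le> 0") (auto intro: mult_mono order_trans[OF mult_nonpos_nonneg])
  then have "y\<^sup>2 - x\<^sup>2 \<le> 1 - r\<^sup>2" by (simp add: power2_eq_square algebra_simps)
  with big show False by linarith
qed

lemma real_ineq_5_imp_7: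
  fixes x y r B G :: real
  assumes "0 \<le> x" "0 \<le> y" "0 \<le> r" "0 \<le> B" "0 \<le> G"
    and BG: "B\<^sup>2 = G\<^sup>2 + (1 - r\<^sup>2) * (x\<^sup>2 - y\<^sup>2)"
    and "\<bar>y - x * r\<bar> \<le> G"
    and h5: "x\<^sup>2 - y\<^sup>2 + r\<^sup>2 + 2 * G < 1" and "y < 1"
  shows "B + G < 1 - r\<^sup>2"
proof -
  define u where "u = 1 - r\<^sup>2"
  have "G < u"
    unfolding u_def using real_ineq_5_imp_lt assms by blast
  then have "0 < u"
    using assms(5) by linarith
  have "x\<^sup>2 - y\<^sup>2 < u - 2 * G" using h5 unfolding u_def by linarith
  then have "u * (x\<^sup>2 - y\<^sup>2) < u * (u - 2 * G)"
    using \<open>0 < u\<close> by simp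
  then have "B\<^sup>2 < (u - G)\<^sup>2"
    using BG unfolding u_def[symmetric] by (simp add: power2_eq_square algebra_simps)
  then show ?thesis
    using \<open>G < u\<close> power_less_imp_less_base unfolding u_def by fastforce
qed

lemma ex_mult_cball_iff_norm_le:
  fixes u v :: complex
  shows "(\<exists>z. cmod z \<le> 1 \<and> u = z * v) \<longleftrightarrow> cmod u \<le> cmod v"
proof
  assume "\<exists>z. cmod z \<le> 1 \<and> u = z * v"
  then show "cmod u \<le> cmod v" by (auto simp: norm_mult mult_left_le_one_le)
next
  assume le: "cmod u \<le> cmod v"
  show "\<exists>z. cmod z \<le> 1 \<and> u = z * v"
  proof (cases "v = 0")
    case True
    with le show ?thesis by (intro exI[of _ 0]) simp
  next
    case False
    with le show ?thesis by (intro exI[of _ "u / v"]) (simp add: norm_divide divide_le_eq_1)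
  qed
qed

lemma ex_norm_eq_Re_mult_eq:
  fixes c :: complex and r :: real
  assumes "0 \<le> r"
  shows "\<exists>w. cmod w = r \<and> Re (c * w) = cmod c * r"
proof (cases "c = 0")
  case True
  with assms show ?thesis by (intro exI[of _ "of_real r"]) simp
next
  case False
  have "c * (of_real r * cnj c / of_real (cmod c)) = of_real r * (c * cnj c) / of_real (cmod c)"
    by simp
  also have "\<dots> = of_real (r * cmod c)"
    using False by (simp add: complex_norm_square[symmetric] power2_eq_square)
  finally have "Re (c * (of_real r * cnj c / of_real (cmod c))) = cmod c * r"
    by simp
  with assms False show ?thesis
    by (intro exI[of _ "of_real r * cnj c / of_real (cmod c)"]) (simp add: norm_mult norm_divide)
qed

(* Lemmas in_tetrablock_iff_N state condition (N) of the theorem for the normalised point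
   a = s_j / binom(n, j), b = s_{n-j} / binom(n, j). *)
definition in_tetrablock :: "complex \<Rightarrow> complex \<Rightarrow> complex \<Rightarrow> bool" where
  "in_tetrablock a b p \<longleftrightarrow>
     (\<forall>z w. cmod z \<le> 1 \<longrightarrow> cmod w \<le> 1 \<longrightarrow> 1 - a * z - b * w + p * z * w \<noteq> 0)"

lemma in_tetrablock_commute: "in_tetrablock a b p \<longleftrightarrow> in_tetrablock b a p"
proof -
  have "1 - a * z - b * w + p * z * w = 1 - b * w - a * z + p * w * z" for z w
    by (simp add: algebra_simps)
  then show ?thesis unfolding in_tetrablock_def by metis
qed

lemma in_tetrablock_iff_fraction_bound:
  "in_tetrablock a b p \<longleftrightarrow> (\<forall>w. cmod w \<le> 1 \<longrightarrow> cmod (a - p * w) < cmod (1 - b * w))"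
proof -
  have "1 - a * z - b * w + p * z * w = 0 \<longleftrightarrow> 1 - b * w = z * (a - p * w)" for z w
    by (auto simp: algebra_simps)
  then have "in_tetrablock a b p \<longleftrightarrow>
      \<not> (\<exists>w. cmod w \<le> 1 \<and> (\<exists>z. cmod z \<le> 1 \<and> 1 - b * w = z * (a - p * w)))"
    unfolding in_tetrablock_def by blast
  then show ?thesis unfolding ex_mult_cball_iff_norm_le using not_le by blast
qed

lemma fraction_bound_iff_quadratic_crit:
  "(\<forall>w. cmod w \<le> 1 \<longrightarrow> cmod (b - p * w) < cmod (1 - a * w)) \<longleftrightarrow>
     cmod (a - cnj b * p) < 1 - (cmod b)\<^sup>2 \<and>
     2 * cmod (a - cnj b * p) < (1 - (cmod b)\<^sup>2) + ((cmod a)\<^sup>2 - (cmod p)\<^sup>2)"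
proof -
  define A D c where "A = 1 - (cmod b)\<^sup>2" and "D = (cmod a)\<^sup>2 - (cmod p)\<^sup>2"
    and "c = a - cnj b * p"
  have lt_iff: "cmod (b - p * w) < cmod (1 - a * w) \<longleftrightarrow> 0 < A + D * (cmod w)\<^sup>2 - 2 * Re (c * w)" for w
  proof -
    have "cmod (b - p * w) < cmod (1 - a * w) \<longleftrightarrow> 0 < (cmod (1 - a * w))\<^sup>2 - (cmod (b - p * w))\<^sup>2"
      by (simp flip: not_le)
    then show ?thesis
      unfolding norm_one_minus_sq_diff A_def D_def c_def .
  qed
  have "(\<forall>w. cmod w \<le> 1 \<longrightarrow> cmod (b - p * w) < cmod (1 - a * w)) \<longleftrightarrow>
      (\<forall>r. 0 \<le> r \<longrightarrow> r \<le> 1 \<longrightarrow> 0 < A + D * r\<^sup>2 - 2 * cmod c * r)"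
  proof safe
    fix r :: real
    assume bound: "\<forall>w. cmod w \<le> 1 \<longrightarrow> cmod (b - p * w) < cmod (1 - a * w)" and "0 \<le> r" "r \<le> 1"
    then obtain w where "cmod w = r" "Re (c * w) = cmod c * r"
      using ex_norm_eq_Re_mult_eq by blast
    with bound \<open>r \<le> 1\<close> show "0 < A + D * r\<^sup>2 - 2 * cmod c * r"
      using lt_iff[of w] by auto
  next
    fix w :: complex
    assume "\<forall>r. 0 \<le> r \<longrightarrow> r \<le> 1 \<longrightarrow> 0 < A + D * r\<^sup>2 - 2 * cmod c * r" and "cmod w \<le> 1"
    then have "0 < A + D * (cmod w)\<^sup>2 - 2 * cmod c * cmod w" by simp
    moreover have "Re (c * w) \<le> cmod c * cmod w"
      using complex_Re_le_cmod[of "c * w"] by (simp add: norm_mult)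
    ultimately show "cmod (b - p * w) < cmod (1 - a * w)"
      unfolding lt_iff by linarith
  qed
  also have "\<dots> \<longleftrightarrow> cmod c < A \<and> 2 * cmod c < A + D"
    using norm_diff_cnj_mult_sq[of a b p]
    by (intro quadratic_pos_on_unit_interval_iff) (auto simp: A_def D_def c_def)
  finally show ?thesis unfolding A_def D_def c_def .
qed

lemma in_tetrablock_iff_quadratic_crit:
  "in_tetrablock a b p \<longleftrightarrow>
     cmod (a - cnj b * p) < 1 - (cmod b)\<^sup>2 \<and>
     2 * cmod (a - cnj b * p) < (1 - (cmod b)\<^sup>2) + ((cmod a)\<^sup>2 - (cmod p)\<^sup>2)"
  using in_tetrablock_commute in_tetrablock_iff_fraction_bound fraction_bound_iff_quadratic_crit
  by blast

lemma in_tetrablock_iff_4: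
  "in_tetrablock a b p \<longleftrightarrow> cmod (a - cnj b * p) + cmod (a * b - p) < 1 - (cmod b)\<^sup>2"
  unfolding in_tetrablock_iff_quadratic_crit
  by (rule add_lt_iff_quadratic_crit[symmetric]) (simp_all add: norm_diff_cnj_mult_sq)

lemma norm_diff_cnj_mult_ge: "\<bar>cmod a - cmod b * cmod p\<bar> \<le> cmod (a - cnj b * p)"
  using norm_triangle_ineq3[of a "cnj b * p"] by (simp add: norm_mult)

lemma in_tetrablock_imp_7:
  assumes "in_tetrablock a b p"
  shows "cmod (b - cnj a * p) + cmod (a - cnj b * p) < 1 - (cmod p)\<^sup>2"
  using assms in_tetrablock_iff_quadratic_crit[of a b p] in_tetrablock_iff_quadratic_crit[of b a p]
    in_tetrablock_commute[of a b p]
  by linarith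

lemma in_tetrablock_imp_5:
  assumes "in_tetrablock a b p"
  shows "(cmod a)\<^sup>2 - (cmod b)\<^sup>2 + (cmod p)\<^sup>2 + 2 * cmod (b - cnj a * p) < 1 \<and> cmod b < 1"
proof
  show "(cmod a)\<^sup>2 - (cmod b)\<^sup>2 + (cmod p)\<^sup>2 + 2 * cmod (b - cnj a * p) < 1"
    using assms in_tetrablock_iff_quadratic_crit[of b a p] in_tetrablock_commute[of a b p]
    by linarith
  have "(cmod b)\<^sup>2 < 1"
    using assms in_tetrablock_iff_quadratic_crit[of a b p] norm_ge_zero[of "a - cnj b * p"]
    by linarith
  then show "cmod b < 1"
    by (simp add: abs_square_less_1)
qed

lemma ineq_5_imp_7:
  assumes "(cmod a)\<^sup>2 - (cmod b)\<^sup>2 + (cmod p)\<^sup>2 + 2 * cmod (b - cnj a * p) < 1" and "cmod b < 1"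
  shows "cmod (b - cnj a * p) + cmod (a - cnj b * p) < 1 - (cmod p)\<^sup>2"
proof -
  have "(cmod (a - cnj b * p))\<^sup>2
      = (cmod (b - cnj a * p))\<^sup>2 + (1 - (cmod p)\<^sup>2) * ((cmod a)\<^sup>2 - (cmod b)\<^sup>2)"
    using norm_diff_cnj_mult_sq[of a b p] norm_diff_cnj_mult_sq[of b a p]
    by (simp add: algebra_simps)
  from real_ineq_5_imp_7[OF norm_ge_zero norm_ge_zero norm_ge_zero norm_ge_zero norm_ge_zero
      this norm_diff_cnj_mult_ge[of b a p] assms]
  show ?thesis by (simp add: add.commute)
qed

lemma ineq_7_imp_6:
  assumes "cmod (b - cnj a * p) + cmod (a - cnj b * p) < 1 - (cmod p)\<^sup>2"
  shows "(cmod a)\<^sup>2 + (cmod b)\<^sup>2 - (cmod p)\<^sup>2 + 2 * cmod (a * b - p) < 1 \<and> cmod p < 1"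
proof -
  have "(cmod (b - cnj a * p))\<^sup>2 = (cmod (a * b - p))\<^sup>2 + (1 - (cmod a)\<^sup>2) * ((cmod b)\<^sup>2 - (cmod p)\<^sup>2)"
    using norm_diff_cnj_mult_sq[of b a p] by (simp add: mult.commute)
  note real_ineq_7_imp_6[OF norm_ge_zero norm_ge_zero norm_ge_zero norm_ge_zero norm_ge_zero
      norm_ge_zero norm_diff_cnj_mult_sq[of a b p] this
      norm_diff_cnj_mult_ge[of a b p] norm_diff_cnj_mult_ge[of b a p]]
  with assms show ?thesis by (simp add: add.commute)
qed

lemma norm_vec2_sq:
  fixes v :: "complex^2"
  shows "(norm v)\<^sup>2 = (cmod (v$1))\<^sup>2 + (cmod (v$2))\<^sup>2"
  unfolding norm_vec_def L2_set_def by (simp add: sum_2)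

lemma matrix_vector_mult_2:
  fixes M :: "complex^2^2"
  shows "(M *v v)$1 = M$1$1 * v$1 + M$1$2 * v$2" "(M *v v)$2 = M$2$1 * v$1 + M$2$2 * v$2"
  unfolding matrix_vector_mult_def by (simp_all add: sum_2)

lemma norm_mat_mult_le: "norm (M *v v) \<le> mat_opnorm M * norm v"
  unfolding mat_opnorm_def by (rule onorm[OF matrix_vector_mul_bounded_linear])

lemma hermitian_form_2_ge:
  fixes al de :: real and be v1 v2 :: complex
  assumes "0 < al + de"
  shows "(al * de - (cmod be)\<^sup>2) / (al + de) * ((cmod v1)\<^sup>2 + (cmod v2)\<^sup>2)
    \<le> al * (cmod v1)\<^sup>2 + 2 * Re (be * cnj v1 * v2) + de * (cmod v2)\<^sup>2"
proof -
  have "(al + de) * (al * (cmod v1)\<^sup>2 + 2 * Re (be * cnj v1 * v2) + de * (cmod v2)\<^sup>2)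
      - (al * de - (cmod be)\<^sup>2) * ((cmod v1)\<^sup>2 + (cmod v2)\<^sup>2)
      = (cmod (of_real al * v1 + be * v2))\<^sup>2 + (cmod (cnj be * v1 + of_real de * v2))\<^sup>2"
    unfolding cmod_power2 by (simp add: algebra_simps power2_eq_square)
  with assms show ?thesis
    by (simp add: field_simps)
qed

(* With d = det (I - M^* M), the form I - M^* M dominates d / tr (I - M^* M) times the identity. *)
lemma mat_opnorm_lt_1_2x2:
  fixes M :: "complex^2^2"
  defines "d \<equiv> 1 - (cmod (M$1$1))\<^sup>2 - (cmod (M$1$2))\<^sup>2 - (cmod (M$2$1))\<^sup>2 - (cmod (M$2$2))\<^sup>2
      + (cmod (det M))\<^sup>2"
  assumes "cmod (det M) < 1" and "0 < d"
  shows "mat_opnorm M < 1"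
proof -
  define al de be where "al = 1 - (cmod (M$1$1))\<^sup>2 - (cmod (M$2$1))\<^sup>2"
    and "de = 1 - (cmod (M$1$2))\<^sup>2 - (cmod (M$2$2))\<^sup>2"
    and "be = - (cnj (M$1$1) * M$1$2 + cnj (M$2$1) * M$2$2)"
  have d: "al * de - (cmod be)\<^sup>2 = d"
    unfolding al_def de_def be_def d_def det_2 cmod_power2 by (simp add: algebra_simps power2_eq_square)
  have "(cmod (det M))\<^sup>2 < 1"
    using assms(2) by (simp add: abs_square_less_1)
  then have "d < al + de"
    unfolding al_def de_def d_def by simp
  then have "0 < al + de" "0 < d / (al + de)" "d / (al + de) < 1"
    using assms(3) by simp_all
  have "(norm (M *v v))\<^sup>2 \<le> (1 - d / (al + de)) * (norm v)\<^sup>2" for v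
  proof -
    have "(norm v)\<^sup>2 - (norm (M *v v))\<^sup>2
        = al * (cmod (v$1))\<^sup>2 + 2 * Re (be * cnj (v$1) * v$2) + de * (cmod (v$2))\<^sup>2"
      unfolding al_def de_def be_def norm_vec2_sq matrix_vector_mult_2 cmod_power2
      by (simp add: algebra_simps power2_eq_square)
    with hermitian_form_2_ge[OF \<open>0 < al + de\<close>, of be "v$1" "v$2"] show ?thesis
      unfolding d norm_vec2_sq by (simp add: algebra_simps)
  qed
  then have "mat_opnorm M \<le> sqrt (1 - d / (al + de))"
    unfolding mat_opnorm_def using \<open>d / (al + de) < 1\<close>
    by (intro onorm_le) (metis real_le_rsqrt real_sqrt_mult real_sqrt_abs abs_norm_cancel)
  also have "\<dots> < 1"
    using \<open>0 < d / (al + de)\<close> \<open>d / (al + de) < 1\<close> by simp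
  finally show ?thesis .
qed

lemma singular_imp_ex_null_vector:
  fixes A :: "'a::field^'n^'n"
  assumes "det A = 0"
  obtains v where "v \<noteq> 0" "A *v v = 0"
  using assms invertible_det_nz[of A] invertible_left_inverse[of A] matrix_left_invertible_ker[of A]
  by blast

(* A zero of 1 - a z - b w + det B z w makes I - B diag(z, w) singular, so B would fix a
   vector it cannot shrink. *)
lemma in_tetrablock_of_contraction:
  fixes B :: "complex^2^2"
  assumes "mat_opnorm B < 1"
  shows "in_tetrablock (B$1$1) (B$2$2) (det B)"
  unfolding in_tetrablock_def
proof (intro allI impI notI)
  fix z w :: complex
  assume "cmod z \<le> 1" "cmod w \<le> 1" and zero: "1 - B$1$1 * z - B$2$2 * w + det B * z * w = 0"
  define D :: "complex^2^2" where "D = (\<chi> i j. if i = j then (if i = 1 then z else w) else 0)"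
  have "det (mat 1 - B ** D) = 1 - B$1$1 * z - B$2$2 * w + det B * z * w"
    unfolding D_def det_2 by (simp add: matrix_matrix_mult_def sum_2 mat_def algebra_simps)
  then obtain v where "v \<noteq> 0" and "(mat 1 - B ** D) *v v = 0"
    using zero singular_imp_ex_null_vector by metis
  then have v: "v = B *v (D *v v)"
    by (simp add: matrix_vector_mult_diff_rdistrib matrix_vector_mul_assoc)
  have "norm (D *v v) \<le> norm v"
  proof (rule norm_le_componentwise_cart)
    fix i :: 2
    show "norm ((D *v v)$i) \<le> norm (v$i)"
      using \<open>cmod z \<le> 1\<close> \<open>cmod w \<le> 1\<close> exhaust_2[of i]
      by (auto simp: D_def matrix_vector_mult_2 norm_mult mult_left_le_one_le)
  qed
  then have "norm v \<le> mat_opnorm B * norm v"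
    using norm_mat_mult_le[of B "D *v v"] v
    by (metis mult_left_mono order_trans mat_opnorm_def onorm_pos_le matrix_vector_mul_bounded_linear)
  with assms \<open>v \<noteq> 0\<close> show False
    by (simp add: mult_le_cancel_right1)
qed

lemma symmetric_contraction_of_6:
  assumes "(cmod a)\<^sup>2 + (cmod b)\<^sup>2 - (cmod p)\<^sup>2 + 2 * cmod (a * b - p) < 1" and "cmod p < 1"
  shows "\<exists>B::complex^2^2. mat_opnorm B < 1 \<and> transpose B = B \<and> B$1$1 = a \<and> B$2$2 = b \<and> det B = p"
proof -
  define x where "x = csqrt (a * b - p)"
  define B :: "complex^2^2" where "B = (\<chi> i j. if i = j then (if i = 1 then a else b) else x)"
  have entries: "B$1$1 = a" "B$1$2 = x" "B$2$1 = x" "B$2$2 = b"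
    unfolding B_def by simp_all
  have "transpose B = B"
    unfolding B_def transpose_def by (simp add: vec_eq_iff)
  moreover have "det B = p"
    unfolding det_2 entries x_def by (simp flip: power2_eq_square)
  moreover have "mat_opnorm B < 1"
  proof (rule mat_opnorm_lt_1_2x2)
    have "(cmod x)\<^sup>2 = cmod (a * b - p)"
      unfolding x_def by (simp flip: norm_power)
    with assms \<open>det B = p\<close> show "cmod (det B) < 1" "0 < 1 - (cmod (B$1$1))\<^sup>2 - (cmod (B$1$2))\<^sup>2
        - (cmod (B$2$1))\<^sup>2 - (cmod (B$2$2))\<^sup>2 + (cmod (det B))\<^sup>2"
      by (simp_all add: entries)
  qed
  ultimately show ?thesis
    using entries by blast
qed

lemma in_tetrablock_iff_6:
  "in_tetrablock a b p \<longleftrightarrow>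
     (cmod a)\<^sup>2 + (cmod b)\<^sup>2 - (cmod p)\<^sup>2 + 2 * cmod (a * b - p) < 1 \<and> cmod p < 1"
  using in_tetrablock_imp_7 ineq_7_imp_6 symmetric_contraction_of_6 in_tetrablock_of_contraction
  by metis

lemma in_tetrablock_iff_7:
  "in_tetrablock a b p \<longleftrightarrow> cmod (b - cnj a * p) + cmod (a - cnj b * p) < 1 - (cmod p)\<^sup>2"
  using in_tetrablock_imp_7 ineq_7_imp_6 in_tetrablock_iff_6 by blast

lemma in_tetrablock_iff_5:
  "in_tetrablock a b p \<longleftrightarrow>
     (cmod a)\<^sup>2 - (cmod b)\<^sup>2 + (cmod p)\<^sup>2 + 2 * cmod (b - cnj a * p) < 1 \<and> cmod b < 1"
  using in_tetrablock_imp_5 ineq_5_imp_7 in_tetrablock_iff_7 by blast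

lemma in_tetrablock_iff_8:
  "in_tetrablock a b p \<longleftrightarrow>
     (\<exists>B::complex^2^2. mat_opnorm B < 1 \<and> B$1$1 = a \<and> B$2$2 = b \<and> det B = p)"
  using in_tetrablock_iff_6 symmetric_contraction_of_6 in_tetrablock_of_contraction by metis

lemma in_tetrablock_iff_9:
  "in_tetrablock a b p \<longleftrightarrow>
     (\<exists>B::complex^2^2. mat_opnorm B < 1 \<and> transpose B = B \<and> B$1$1 = a \<and> B$2$2 = b \<and> det B = p)"
  using in_tetrablock_iff_6 symmetric_contraction_of_6 in_tetrablock_of_contraction by metis

definition Psi_Hinf :: "complex \<Rightarrow> complex \<Rightarrow> complex \<Rightarrow> ereal" where
  "Psi_Hinf a b p =
     (if a * b = p then ereal (cmod a)
      else if \<forall>w\<in>ball 0 1. b * w \<noteq> 1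
      then (SUP w\<in>ball 0 1. ereal (cmod ((p * w - a) / (b * w - 1))))
      else \<infinity>)"

lemma SUP_ereal_less_iff:
  fixes f :: "'a \<Rightarrow> real"
  shows "(SUP x\<in>A. ereal (f x)) < ereal t \<longleftrightarrow> (\<exists>c<t. \<forall>x\<in>A. f x \<le> c)"
proof
  assume "(SUP x\<in>A. ereal (f x)) < ereal t"
  then obtain c where c: "(SUP x\<in>A. ereal (f x)) < ereal c" "ereal c < ereal t"
    using ereal_dense2 by blast
  have "f x \<le> c" if "x \<in> A" for x
  proof -
    have "ereal (f x) \<le> (SUP x\<in>A. ereal (f x))" using that by (rule SUP_upper)
    then have "ereal (f x) < ereal c" using c(1) by (rule le_less_trans)
    then show ?thesis by simp
  qed
  with c(2) show "\<exists>c<t. \<forall>x\<in>A. f x \<le> c" by auto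
next
  assume "\<exists>c<t. \<forall>x\<in>A. f x \<le> c"
  then obtain c where "c < t" "\<forall>x\<in>A. f x \<le> c" by blast
  then have "(SUP x\<in>A. ereal (f x)) \<le> ereal c" by (simp add: SUP_le_iff)
  with \<open>c < t\<close> show "(SUP x\<in>A. ereal (f x)) < ereal t" by (simp add: le_less_trans)
qed

lemma fraction_bound_uniform:
  assumes bound: "\<forall>w. cmod w \<le> 1 \<longrightarrow> cmod (a - p * w) < cmod (1 - b * w)"
  obtains c where "c < 1" "\<forall>w. cmod w \<le> 1 \<longrightarrow> cmod (a - p * w) \<le> c * cmod (1 - b * w)"
proof -
  define f where "f w = cmod (a - p * w) / cmod (1 - b * w)" for w
  have nz: "\<forall>w\<in>cball 0 1. cmod (1 - b * w) \<noteq> 0"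
    using bound by (fastforce simp: dist_norm)
  then have "continuous_on (cball 0 1) f"
    unfolding f_def by (intro continuous_intros) auto
  then obtain w0 where "w0 \<in> cball 0 1" and max: "\<forall>w\<in>cball 0 1. f w \<le> f w0"
    using continuous_attains_sup[of "cball 0 1" f] by auto
  show ?thesis
  proof
    show "f w0 < 1"
      using bound \<open>w0 \<in> cball 0 1\<close> nz unfolding f_def by (simp add: dist_norm)
    show "\<forall>w. cmod w \<le> 1 \<longrightarrow> cmod (a - p * w) \<le> f w0 * cmod (1 - b * w)"
      using max nz by (auto simp: f_def dist_norm field_simps)
  qed
qed

(* At a boundary point with b w = 1 the bound forces a = p w, hence a b = p. *)
lemma fraction_bound_of_uniform_on_ball:
  assumes "a * b \<noteq> p" and "c < 1"
    and on_ball: "\<forall>w\<in>ball 0 1. cmod (a - p * w) \<le> c * cmod (1 - b * w)"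
  shows "\<forall>w. cmod w \<le> 1 \<longrightarrow> cmod (a - p * w) < cmod (1 - b * w)"
proof (intro allI impI)
  fix w :: complex
  assume "cmod w \<le> 1"
  have "closed {w. cmod (a - p * w) \<le> c * cmod (1 - b * w)}"
    by (intro closed_Collect_le continuous_intros)
  then have "closure (ball 0 1) \<subseteq> {w. cmod (a - p * w) \<le> c * cmod (1 - b * w)}"
    using on_ball by (intro closure_minimal) auto
  with \<open>cmod w \<le> 1\<close> have le: "cmod (a - p * w) \<le> c * cmod (1 - b * w)"
    by (auto simp: dist_norm)
  show "cmod (a - p * w) < cmod (1 - b * w)"
  proof (cases "b * w = 1")
    case True
    with le have "a = p * w" by simp
    with True \<open>a * b \<noteq> p\<close> show ?thesis
      by (simp add: mult.assoc mult.commute[of w b])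
  next
    case False
    then have "c * cmod (1 - b * w) < cmod (1 - b * w)"
      using \<open>c < 1\<close> by simp
    with le show ?thesis by linarith
  qed
qed

lemma in_tetrablock_degenerate_iff:
  assumes "a * b = p"
  shows "in_tetrablock a b p \<longleftrightarrow> cmod a < 1 \<and> cmod b < 1"
proof -
  have "a - p * w = a * (1 - b * w)" for w
    using assms by (simp add: algebra_simps)
  then have "in_tetrablock a b p \<longleftrightarrow> (\<forall>w. cmod w \<le> 1 \<longrightarrow> cmod a * cmod (1 - b * w) < cmod (1 - b * w))"
    unfolding in_tetrablock_iff_fraction_bound by (simp add: norm_mult)
  also have "\<dots> \<longleftrightarrow> cmod a < 1 \<and> cmod b < 1"
  proof safe
    assume bound: "\<forall>w. cmod w \<le> 1 \<longrightarrow> cmod a * cmod (1 - b * w) < cmod (1 - b * w)"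
    from bound[rule_format, of 0] show "cmod a < 1" by simp
    show "cmod b < 1"
    proof (rule ccontr)
      assume "\<not> cmod b < 1"
      then have "cmod (1 / b) \<le> 1" "b \<noteq> 0"
        by (auto simp: norm_divide divide_le_eq)
      with bound[rule_format, of "1 / b"] show False by simp
    qed
  next
    fix w :: complex
    assume "cmod a < 1" "cmod b < 1" "cmod w \<le> 1"
    then have "cmod (b * w) < 1"
      using mult_left_le[of "cmod w" "cmod b"] by (simp add: norm_mult)
    then have "0 < cmod (1 - b * w)"
      by auto
    with \<open>cmod a < 1\<close> show "cmod a * cmod (1 - b * w) < cmod (1 - b * w)"
      by simp
  qed
  finally show ?thesis .
qed

lemma in_tetrablock_nondegenerate_iff:
  assumes "a * b \<noteq> p"
  shows "in_tetrablock a b p \<longleftrightarrow> (\<forall>w\<in>ball 0 1. b * w \<noteq> 1)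
    \<and> (SUP w\<in>ball 0 1. ereal (cmod ((p * w - a) / (b * w - 1)))) < ereal 1"
proof -
  have f: "b * w \<noteq> 1 \<Longrightarrow> cmod ((p * w - a) / (b * w - 1)) \<le> c \<longleftrightarrow> cmod (a - p * w) \<le> c * cmod (1 - b * w)"
    for w c
    by (simp add: norm_divide norm_minus_commute divide_le_eq)
  show ?thesis
  proof
    assume "in_tetrablock a b p"
    then have bound: "\<forall>w. cmod w \<le> 1 \<longrightarrow> cmod (a - p * w) < cmod (1 - b * w)"
      unfolding in_tetrablock_iff_fraction_bound .
    then obtain c where "c < 1" and c: "\<forall>w. cmod w \<le> 1 \<longrightarrow> cmod (a - p * w) \<le> c * cmod (1 - b * w)"
      using fraction_bound_uniform by blast
    have nz: "\<forall>w\<in>ball 0 1. b * w \<noteq> 1"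
    proof
      fix w :: complex
      assume "w \<in> ball 0 1"
      with bound have "cmod (a - p * w) < cmod (1 - b * w)"
        by simp
      then show "b * w \<noteq> 1" by auto
    qed
    moreover have "(SUP w\<in>ball 0 1. ereal (cmod ((p * w - a) / (b * w - 1)))) < ereal 1"
      unfolding SUP_ereal_less_iff using \<open>c < 1\<close> c f nz by fastforce
    ultimately show "(\<forall>w\<in>ball 0 1. b * w \<noteq> 1)
      \<and> (SUP w\<in>ball 0 1. ereal (cmod ((p * w - a) / (b * w - 1)))) < ereal 1" ..
  next
    assume "(\<forall>w\<in>ball 0 1. b * w \<noteq> 1)
      \<and> (SUP w\<in>ball 0 1. ereal (cmod ((p * w - a) / (b * w - 1)))) < ereal 1"
    then obtain c where "c < 1" "\<forall>w\<in>ball 0 1. cmod (a - p * w) \<le> c * cmod (1 - b * w)"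
      unfolding SUP_ereal_less_iff using f by blast
    with assms show "in_tetrablock a b p"
      unfolding in_tetrablock_iff_fraction_bound by (rule fraction_bound_of_uniform_on_ball)
  qed
qed

lemma in_tetrablock_iff_3:
  "in_tetrablock a b p \<longleftrightarrow> Psi_Hinf a b p < 1 \<and> (a * b = p \<longrightarrow> cmod b < 1)"
  using in_tetrablock_degenerate_iff[of a b p] in_tetrablock_nondegenerate_iff[of a b p]
  by (auto simp: Psi_Hinf_def one_ereal_def)

section \<open>Elementary symmetric polynomials and Vieta's formulas\<close>

lemma finite_subsets_lessThan: "finite {S. S \<subseteq> {..<m::nat} \<and> P S}"
  by (rule finite_subset[of _ "Pow {..<m}"]) auto

lemma esym_0 [simp]: "esym m z 0 = 1"
proof -
  have "{S. S \<subseteq> {..<m} \<and> card S = 0} = {{}}"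
    using finite_subset[OF _ finite_lessThan] by (auto simp: card_eq_0_iff)
  then show ?thesis unfolding esym_def by simp
qed

lemma esym_eq_0_of_gt: "m < k \<Longrightarrow> esym m z k = 0"
proof -
  assume "m < k"
  have "card S \<noteq> k" if "S \<subseteq> {..<m}" for S
    using card_mono[OF finite_lessThan that] \<open>m < k\<close> by simp
  then have "{S. S \<subseteq> {..<m} \<and> card S = k} = {}"
    by blast
  then show ?thesis unfolding esym_def by (simp only: sum.empty)
qed

lemma esym_self: "esym m z m = (\<Prod>i<m. z i)"
proof -
  have "S = {..<m}" if "S \<subseteq> {..<m}" "card S = m" for S
    using card_subset_eq[OF finite_lessThan that(1)] that(2) by simp
  then have "{S. S \<subseteq> {..<m} \<and> card S = m} = {{..<m}}"
    by auto
  then show ?thesis unfolding esym_def by simp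
qed

lemma esym_Suc: "esym (Suc m) z (Suc k) = esym m z (Suc k) + z m * esym m z k"
proof -
  define Sk where "Sk = {S. S \<subseteq> {..<m} \<and> card S = k}"
  have Sk: "T \<in> Sk \<Longrightarrow> finite T \<and> m \<notin> T" for T
    unfolding Sk_def using finite_subset by auto
  have "card (insert m T) = Suc (card T)" if "T \<subseteq> {..<m}" for T
    using that finite_subset[OF that] by (subst card_insert_disjoint) auto
  then have "{insert m T |T. T \<subseteq> {..<m} \<and> card (insert m T) = Suc k} = insert m ` Sk"
    unfolding Sk_def by auto
  then have "{S. S \<subseteq> {..<Suc m} \<and> card S = Suc k}
      = {S. S \<subseteq> {..<m} \<and> card S = Suc k} \<union> insert m ` Sk"
    unfolding lessThan_Suc subset_insert_lemma by simp
  moreover have "inj_on (insert m) Sk"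
    using Sk by (intro inj_onI) (metis Diff_insert_absorb)
  moreover have "(\<Sum>T\<in>Sk. \<Prod>i\<in>insert m T. z i) = z m * esym m z k"
    using Sk unfolding esym_def Sk_def[symmetric] by (simp add: sum_distrib_left)
  moreover have "{S. S \<subseteq> {..<m} \<and> card S = Suc k} \<inter> insert m ` Sk = {}"
    unfolding Sk_def by auto
  ultimately show ?thesis
    unfolding esym_def
    by (simp add: sum.union_disjoint sum.reindex finite_subsets_lessThan Sk_def)
qed

lemma esym_cnj: "esym m (\<lambda>i. cnj (z i)) k = cnj (esym m z k)"
  unfolding esym_def by simp

lemma norm_esym_less:
  assumes "\<forall>i<m. cmod (z i) < 1" and "1 \<le> k" "k \<le> m"
  shows "cmod (esym m z k) < real (m choose k)"
proof -
  define A where "A = {S. S \<subseteq> {..<m} \<and> card S = k}"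
  have "finite A" "card A = m choose k"
    unfolding A_def using finite_subsets_lessThan n_subsets[of "{..<m}" k] by simp_all
  have "{..<k} \<in> A"
    using assms(3) unfolding A_def by auto
  have "cmod (\<Prod>i\<in>S. z i) < 1" if "S \<in> A" for S
  proof -
    have "S \<subseteq> {..<m}" "card S = k" using that unfolding A_def by auto
    then have "finite S" "S \<noteq> {}" using assms(2) finite_subset by auto
    then obtain i where "i \<in> S" by blast
    have "(\<Prod>i\<in>S. cmod (z i)) < (\<Prod>i\<in>S. 1)"
      using assms(1) \<open>S \<subseteq> {..<m}\<close> \<open>finite S\<close> \<open>i \<in> S\<close>
      by (intro prod_mono_strict[of i]) (auto simp: less_imp_le)
    then show ?thesis by (simp add: prod_norm)
  qed
  then have "(\<Sum>S\<in>A. cmod (\<Prod>i\<in>S. z i)) < (\<Sum>S\<in>A. 1)"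
    using \<open>finite A\<close> \<open>{..<k} \<in> A\<close> by (intro sum_strict_mono) auto
  moreover have "cmod (esym m z k) \<le> (\<Sum>S\<in>A. cmod (\<Prod>i\<in>S. z i))"
    unfolding esym_def A_def[symmetric] by (rule norm_sum)
  ultimately show ?thesis
    using \<open>card A = m choose k\<close> by simp
qed

definition vieta_poly :: "nat \<Rightarrow> (nat \<Rightarrow> complex) \<Rightarrow> complex poly" where
  "vieta_poly m c = (\<Sum>j\<le>m. monom ((-1)^(m - j) * c (m - j)) j)"

(* The reciprocal x^m conj (P (1 / conj x)) of P = vieta_poly m c. *)
definition vieta_poly_star :: "nat \<Rightarrow> (nat \<Rightarrow> complex) \<Rightarrow> complex poly" where
  "vieta_poly_star m c = (\<Sum>j\<le>m. monom ((-1)^j * cnj (c j)) j)"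

lemma coeff_vieta_poly:
  "coeff (vieta_poly m c) j = (if j \<le> m then (-1)^(m - j) * c (m - j) else 0)"
  unfolding vieta_poly_def by (simp add: coeff_sum)

lemma coeff_vieta_poly_star:
  "coeff (vieta_poly_star m c) j = (if j \<le> m then (-1)^j * cnj (c j) else 0)"
  unfolding vieta_poly_star_def by (simp add: coeff_sum)

lemma coeff_prod_linear:
  "coeff (\<Prod>i<m. [:- z i, 1:]) j = (if j \<le> m then (-1)^(m - j) * esym m z (m - j) else 0)"
proof (induction m arbitrary: j)
  case 0
  then show ?case by simp
next
  case (Suc m)
  have prod: "(\<Prod>i<Suc m. [:- z i, 1:])
      = smult (- z m) (\<Prod>i<m. [:- z i, 1:]) + pCons 0 (\<Prod>i<m. [:- z i, 1:])"
    by simp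
  show ?case
  proof (cases j)
    case 0
    then show ?thesis
      unfolding prod using Suc.IH[of 0] esym_Suc[of m z m] esym_eq_0_of_gt[of m "Suc m" z] by simp
  next
    case (Suc i)
    consider "m < i" | "i = m" | k where "i < m" "m - i = Suc k"
      by (metis Suc_diff_Suc linorder_neqE_nat)
    then show ?thesis
    proof cases
      case 3
      then have "m - Suc i = k" by simp
      with 3 show ?thesis
        unfolding prod using Suc Suc.IH[of i] Suc.IH[of "Suc i"] esym_Suc[of m z k]
        by (simp add: algebra_simps)
    qed (use Suc Suc.IH[of i] Suc.IH[of "Suc i"] in \<open>simp_all add: prod\<close>)
  qed
qed

lemma coeff_prod_linear_rev: "coeff (\<Prod>i<m. [:1, - w i:]) j = (-1)^j * esym m w j"
proof (induction m arbitrary: j)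
  case 0
  then show ?case by (cases j) (simp_all add: esym_eq_0_of_gt)
next
  case (Suc m)
  have prod: "(\<Prod>i<Suc m. [:1, - w i:])
      = (\<Prod>i<m. [:1, - w i:]) + pCons 0 (smult (- w m) (\<Prod>i<m. [:1, - w i:]))"
    by simp
  show ?case
    using Suc.IH esym_Suc[of m w "j - 1"] by (cases j) (simp_all add: prod algebra_simps)
qed

lemma vieta_poly_eq_prod:
  assumes "\<forall>k\<le>m. c k = esym m z k"
  shows "vieta_poly m c = (\<Prod>i<m. [:- z i, 1:])"
  using assms by (intro poly_eqI) (simp add: coeff_vieta_poly coeff_prod_linear)

lemma vieta_poly_star_eq_prod:
  assumes "\<forall>k\<le>m. c k = esym m z k"
  shows "vieta_poly_star m c = (\<Prod>i<m. [:1, - cnj (z i):])"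
  using assms esym_eq_0_of_gt[of m _ z]
  by (intro poly_eqI) (simp add: coeff_vieta_poly_star coeff_prod_linear_rev esym_cnj)

section \<open>The Schur-Cohn reduction\<close>

definition schur_stable :: "complex poly \<Rightarrow> bool" where
  "schur_stable P \<longleftrightarrow> (\<forall>x. poly P x = 0 \<longrightarrow> cmod x < 1)"

lemma vieta_poly_factorization:
  assumes "c 0 = 1"
  obtains z where "vieta_poly m c = (\<Prod>i<m. [:- z i, 1:])" "\<forall>k\<le>m. c k = esym m z k"
proof -
  define P where "P = vieta_poly m c"
  have "coeff P m = 1"
    unfolding P_def coeff_vieta_poly using assms by simp
  moreover have "degree P \<le> m"
    unfolding P_def by (rule degree_le) (simp add: coeff_vieta_poly)
  ultimately have "degree P = m" "lead_coeff P = 1"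
    using le_degree[of P m] by fastforce+
  then obtain z where P: "P = (\<Prod>i<m. [:- z i, 1:])"
    using complex_poly_decompose'[of P] by (metis smult_1_left)
  have "c k = esym m z k" if "k \<le> m" for k
    using arg_cong[OF P, of "\<lambda>Q. coeff Q (m - k)"] that
    by (simp add: P_def coeff_vieta_poly coeff_prod_linear)
  with P show ?thesis
    using that unfolding P_def by blast
qed

lemma schur_stable_vieta_poly_iff:
  assumes "c 0 = 1"
  shows "schur_stable (vieta_poly m c) \<longleftrightarrow> (\<exists>z. (\<forall>i<m. cmod (z i) < 1) \<and> (\<forall>k\<le>m. c k = esym m z k))"
proof
  assume stable: "schur_stable (vieta_poly m c)"
  obtain z where P: "vieta_poly m c = (\<Prod>i<m. [:- z i, 1:])" and "\<forall>k\<le>m. c k = esym m z k"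
    using vieta_poly_factorization assms by blast
  moreover have "cmod (z i) < 1" if "i < m" for i
  proof -
    have "poly (vieta_poly m c) (z i) = 0"
      unfolding P poly_prod using that by (intro prod_zero) auto
    with stable show ?thesis unfolding schur_stable_def by blast
  qed
  ultimately show "\<exists>z. (\<forall>i<m. cmod (z i) < 1) \<and> (\<forall>k\<le>m. c k = esym m z k)"
    by blast
next
  assume "\<exists>z. (\<forall>i<m. cmod (z i) < 1) \<and> (\<forall>k\<le>m. c k = esym m z k)"
  then obtain z where "\<forall>i<m. cmod (z i) < 1" and "vieta_poly m c = (\<Prod>i<m. [:- z i, 1:])"
    using vieta_poly_eq_prod by blast
  then show "schur_stable (vieta_poly m c)"
    unfolding schur_stable_def by (auto simp: poly_prod)
qed

lemma norm_one_minus_cnj_mult_le: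
  assumes "1 \<le> cmod x" "cmod z < 1"
  shows "cmod (1 - cnj z * x) \<le> cmod (x - z)"
proof -
  have "(cmod (x - z))\<^sup>2 - (cmod (1 - cnj z * x))\<^sup>2 = ((cmod x)\<^sup>2 - 1) * (1 - (cmod z)\<^sup>2)"
    unfolding cmod_power2 by (simp add: algebra_simps power2_eq_square)
  moreover have "0 \<le> ((cmod x)\<^sup>2 - 1) * (1 - (cmod z)\<^sup>2)"
    using assms by (simp add: abs_square_le_1)
  ultimately have "(cmod (1 - cnj z * x))\<^sup>2 \<le> (cmod (x - z))\<^sup>2"
    by linarith
  then show ?thesis
    by (rule power2_le_imp_le) simp
qed

lemma norm_mult_prod_star_less:
  fixes z :: "nat \<Rightarrow> complex"
  assumes "\<forall>i<m. cmod (z i) < 1" "1 \<le> cmod x" "cmod p < 1"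
  shows "cmod (p * (\<Prod>i<m. 1 - cnj (z i) * x)) < cmod (\<Prod>i<m. x - z i)"
proof -
  have "cmod (\<Prod>i<m. 1 - cnj (z i) * x) \<le> cmod (\<Prod>i<m. x - z i)"
    unfolding prod_norm[symmetric] using assms(1,2) norm_one_minus_cnj_mult_le
    by (intro prod_mono) auto
  then have "cmod (p * (\<Prod>i<m. 1 - cnj (z i) * x)) \<le> cmod p * cmod (\<Prod>i<m. x - z i)"
    unfolding norm_mult by (rule mult_left_mono) simp
  also have "\<dots> < cmod (\<Prod>i<m. x - z i)"
  proof -
    have "x - z i \<noteq> 0" if "i < m" for i
      using assms(1,2) that by force
    then have "(\<Prod>i<m. x - z i) \<noteq> 0"
      by simp
    then show ?thesis using assms(3) by simp
  qed
  finally show ?thesis .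
qed

(* Applied to the coefficients (1, s_1, ..., s_{n-1}, p) this yields the coordinates in condK. *)
definition schur_reduct :: "nat \<Rightarrow> complex \<Rightarrow> (nat \<Rightarrow> complex) \<Rightarrow> nat \<Rightarrow> complex" where
  "schur_reduct m p S k = (S k - p * cnj (S (Suc m - k))) / (1 - of_real ((cmod p)\<^sup>2))"

lemma minus_one_power_Suc_mult:
  assumes "i \<le> m"
  shows "(-1 :: 'a :: comm_ring_1)^(Suc m) * (-1)^(Suc i) = (-1)^(m - i)"
proof -
  obtain d where "m = i + d" using le_Suc_ex[OF assms] by blast
  then have "(-1 :: 'a)^(Suc m) * (-1)^(Suc i) = (-1)^d * ((-1)^(Suc i) * (-1)^(Suc i))"
    by (simp add: power_add algebra_simps)
  also have "(-1 :: 'a)^(Suc i) * (-1)^(Suc i) = 1"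
    by (rule minus_one_mult_self)
  finally show ?thesis using \<open>m = i + d\<close> by simp
qed

lemma mult_cnj_eq_norm_sq: "z * cnj z = (complex_of_real (cmod z))\<^sup>2"
  by (simp add: complex_norm_square[symmetric])

lemma one_minus_norm_sq_nonzero: "cmod p < 1 \<Longrightarrow> 1 - complex_of_real ((cmod p)\<^sup>2) \<noteq> 0"
  by (metis abs_norm_cancel abs_square_eq_1 eq_iff_diff_eq_0 less_irrefl of_real_eq_1_iff)

lemma schur_reduct_0:
  assumes "S 0 = 1" "S (Suc m) = p" "cmod p < 1"
  shows "schur_reduct m p S 0 = 1"
  using one_minus_norm_sq_nonzero[OF assms(3)] assms(1,2)
  unfolding schur_reduct_def by (simp add: mult_cnj_eq_norm_sq)

lemma schur_reduct_inverse:
  assumes "cmod p < 1" "k \<le> Suc m"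
  shows "schur_reduct m p S k + p * cnj (schur_reduct m p S (Suc m - k)) = S k"
proof -
  define c where "c = 1 - complex_of_real ((cmod p)\<^sup>2)"
  have "c \<noteq> 0" "cnj c = c"
    using one_minus_norm_sq_nonzero[OF assms(1)] unfolding c_def by simp_all
  have "schur_reduct m p S k + p * cnj (schur_reduct m p S (Suc m - k))
      = (S k - p * cnj (S (Suc m - k)) + p * (cnj (S (Suc m - k)) - cnj p * S k)) / c"
    using assms(2) \<open>cnj c = c\<close> unfolding schur_reduct_def c_def[symmetric]
    by (simp add: add_divide_distrib)
  also have "\<dots> = S k * (1 - p * cnj p) / c"
    by (simp add: algebra_simps)
  also have "\<dots> = S k"
    using \<open>c \<noteq> 0\<close> unfolding c_def by (simp add: mult_cnj_eq_norm_sq)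
  finally show ?thesis .
qed

lemma vieta_poly_minus_star:
  assumes S0: "S 0 = 1" and Sn: "S (Suc m) = p" and "cmod p < 1"
  shows "vieta_poly (Suc m) S - smult ((-1)^(Suc m) * p) (vieta_poly_star (Suc m) S)
    = smult (1 - of_real ((cmod p)\<^sup>2)) (pCons 0 (vieta_poly m (schur_reduct m p S)))"
    (is "?P = smult ?c _")
proof (rule poly_eqI)
  fix j
  have "?c \<noteq> 0" using one_minus_norm_sq_nonzero[OF \<open>cmod p < 1\<close>] .
  show "coeff ?P j = coeff (smult ?c (pCons 0 (vieta_poly m (schur_reduct m p S)))) j"
  proof (cases j)
    case 0
    then show ?thesis using S0 Sn by (simp add: coeff_vieta_poly coeff_vieta_poly_star)
  next
    case (Suc i)
    show ?thesis
    proof (cases "i \<le> m")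
      case True
      then have "Suc m - (m - i) = Suc i" by simp
      have "coeff ?P j = (-1)^(m - i) * S (m - i) - (-1)^(Suc m) * p * ((-1)^(Suc i) * cnj (S (Suc i)))"
        using Suc True by (simp add: coeff_vieta_poly coeff_vieta_poly_star)
      also have "\<dots> = (-1)^(m - i) * (S (m - i) - p * cnj (S (Suc i)))"
        using minus_one_power_Suc_mult[OF True, where 'a = complex] by (simp add: algebra_simps)
      also have "\<dots> = ?c * ((-1)^(m - i) * schur_reduct m p S (m - i))"
        unfolding schur_reduct_def \<open>Suc m - (m - i) = Suc i\<close> using \<open>?c \<noteq> 0\<close> by simp
      also have "\<dots> = coeff (smult ?c (pCons 0 (vieta_poly m (schur_reduct m p S)))) j"
        using Suc True by (simp add: coeff_vieta_poly)
      finally show ?thesis .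
    qed (simp add: Suc coeff_vieta_poly coeff_vieta_poly_star)
  qed
qed

lemma vieta_poly_eq_reduct_plus_star:
  assumes S0: "S 0 = 1" and Sn: "S (Suc m) = p" and "cmod p < 1"
  shows "vieta_poly (Suc m) S = pCons 0 (vieta_poly m (schur_reduct m p S))
    + smult ((-1)^(Suc m) * p) (vieta_poly_star m (schur_reduct m p S))"
    (is "_ = ?Q")
proof (rule poly_eqI)
  fix j
  have S'0: "schur_reduct m p S 0 = 1" using schur_reduct_0 assms .
  show "coeff (vieta_poly (Suc m) S) j = coeff ?Q j"
  proof (cases j)
    case 0
    then show ?thesis using Sn S'0 by (simp add: coeff_vieta_poly coeff_vieta_poly_star)
  next
    case (Suc i)
    consider "i < m" | "i = m" | "m < i" by linarith
    then show ?thesis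
    proof cases
      case 1
      then have "Suc m - (m - i) = Suc i" "i \<le> m" by simp_all
      have "coeff ?Q j = (-1)^(m - i) * schur_reduct m p S (m - i)
          + (-1)^(Suc m) * p * ((-1)^(Suc i) * cnj (schur_reduct m p S (Suc i)))"
        using Suc 1 by (simp add: coeff_vieta_poly coeff_vieta_poly_star)
      also have "\<dots> = (-1)^(m - i) * (schur_reduct m p S (m - i) + p * cnj (schur_reduct m p S (Suc i)))"
        using minus_one_power_Suc_mult[OF \<open>i \<le> m\<close>, where 'a = complex] by (simp add: algebra_simps)
      also have "\<dots> = (-1)^(m - i) * S (m - i)"
        using schur_reduct_inverse[OF \<open>cmod p < 1\<close>, of "m - i" m S] \<open>Suc m - (m - i) = Suc i\<close> by simp
      finally show ?thesis
        using Suc 1 by (simp add: coeff_vieta_poly)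
    qed (use Suc S0 S'0 in \<open>simp_all add: coeff_vieta_poly coeff_vieta_poly_star\<close>)
  qed
qed

lemma poly_prod_linear:
  fixes z :: "nat \<Rightarrow> complex"
  shows "poly (\<Prod>i<m. [:- z i, 1:]) x = (\<Prod>i<m. x - z i)"
  by (simp add: poly_prod)

lemma poly_prod_linear_star:
  fixes z :: "nat \<Rightarrow> complex"
  shows "poly (\<Prod>i<m. [:1, - cnj (z i):]) x = (\<Prod>i<m. 1 - cnj (z i) * x)"
  by (simp add: poly_prod algebra_simps)

lemma schur_stable_reduct:
  assumes "S 0 = 1" "S (Suc m) = p" "cmod p < 1" and stable: "schur_stable (vieta_poly (Suc m) S)"
  shows "schur_stable (vieta_poly m (schur_reduct m p S))"
  unfolding schur_stable_def
proof (intro allI impI)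
  fix x
  assume root: "poly (vieta_poly m (schur_reduct m p S)) x = 0"
  obtain z where z: "\<forall>i<Suc m. cmod (z i) < 1" "\<forall>k\<le>Suc m. S k = esym (Suc m) z k"
    using stable schur_stable_vieta_poly_iff[of S "Suc m"] assms(1) by blast
  have "poly (vieta_poly (Suc m) S) x - (-1)^(Suc m) * p * poly (vieta_poly_star (Suc m) S) x = 0"
    using arg_cong[OF vieta_poly_minus_star[OF assms(1-3)], of "\<lambda>P. poly P x"] root
    by (simp only: poly_diff poly_smult poly_pCons mult_zero_right add_0)
  then have "(\<Prod>i<Suc m. x - z i) = (-1)^(Suc m) * (p * (\<Prod>i<Suc m. 1 - cnj (z i) * x))"
    unfolding vieta_poly_eq_prod[OF z(2)] vieta_poly_star_eq_prod[OF z(2)]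
      poly_prod_linear poly_prod_linear_star by (simp add: algebra_simps)
  then have "cmod (p * (\<Prod>i<Suc m. 1 - cnj (z i) * x)) = cmod (\<Prod>i<Suc m. x - z i)"
    by (simp add: norm_mult norm_power)
  then show "cmod x < 1"
    using norm_mult_prod_star_less[OF z(1) _ \<open>cmod p < 1\<close>, of x] by linarith
qed

lemma schur_stable_of_reduct:
  assumes "S 0 = 1" "S (Suc m) = p" "cmod p < 1"
    and stable: "schur_stable (vieta_poly m (schur_reduct m p S))"
  shows "schur_stable (vieta_poly (Suc m) S)"
  unfolding schur_stable_def
proof (intro allI impI)
  fix x
  assume root: "poly (vieta_poly (Suc m) S) x = 0"
  obtain w where w: "\<forall>i<m. cmod (w i) < 1" "\<forall>k\<le>m. schur_reduct m p S k = esym m w k"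
    using stable schur_stable_vieta_poly_iff schur_reduct_0[OF assms(1-3)] by blast
  have "x * poly (vieta_poly m (schur_reduct m p S)) x
      + (-1)^(Suc m) * p * poly (vieta_poly_star m (schur_reduct m p S)) x = 0"
    using arg_cong[OF vieta_poly_eq_reduct_plus_star[OF assms(1-3)], of "\<lambda>P. poly P x"] root
    by (simp only: poly_add poly_smult poly_pCons add_0)
  then have "x * (\<Prod>i<m. x - w i) = - ((-1)^(Suc m) * (p * (\<Prod>i<m. 1 - cnj (w i) * x)))"
    unfolding vieta_poly_eq_prod[OF w(2)] vieta_poly_star_eq_prod[OF w(2)]
      poly_prod_linear poly_prod_linear_star by (simp add: algebra_simps eq_neg_iff_add_eq_0)
  then have "cmod (x * (\<Prod>i<m. x - w i)) = cmod ((-1)^(Suc m) * (p * (\<Prod>i<m. 1 - cnj (w i) * x)))"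
    by (metis norm_minus_cancel)
  then have "cmod x * cmod (\<Prod>i<m. x - w i) = cmod (p * (\<Prod>i<m. 1 - cnj (w i) * x))"
    by (simp add: norm_mult norm_power)
  moreover have "cmod (\<Prod>i<m. x - w i) \<le> cmod x * cmod (\<Prod>i<m. x - w i)" if "1 \<le> cmod x"
    using that by (simp add: mult_le_cancel_right1)
  ultimately show "cmod x < 1"
    using norm_mult_prod_star_less[OF w(1) _ \<open>cmod p < 1\<close>, of x] by force
qed

section \<open>The symmetrized polydisc\<close>

definition point_coeffs :: "nat \<Rightarrow> (nat \<Rightarrow> complex) \<Rightarrow> complex \<Rightarrow> nat \<Rightarrow> complex" where
  "point_coeffs m s p k = (if k = 0 then 1 else if k = m then p else s k)"

lemma in_G_iff_esym:
  assumes "1 \<le> m"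
  shows "in_G m s p \<longleftrightarrow> (\<exists>z. (\<forall>i<m. cmod (z i) < 1) \<and> (\<forall>k\<le>m. point_coeffs m s p k = esym m z k))"
proof -
  have "(\<forall>k\<le>m. point_coeffs m s p k = esym m z k) \<longleftrightarrow>
      (\<forall>k\<in>{1..m-1}. s k = esym m z k) \<and> p = (\<Prod>i<m. z i)" for z
    using assms unfolding point_coeffs_def
    by (auto simp: esym_self)
  then show ?thesis
    unfolding in_G_def by simp
qed

lemma in_G_iff_schur_stable:
  "1 \<le> m \<Longrightarrow> in_G m s p \<longleftrightarrow> schur_stable (vieta_poly m (point_coeffs m s p))"
  by (simp add: in_G_iff_esym schur_stable_vieta_poly_iff point_coeffs_def)

lemma vieta_poly_cong: "(\<And>k. k \<le> m \<Longrightarrow> c k = d k) \<Longrightarrow> vieta_poly m c = vieta_poly m d"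
  unfolding vieta_poly_def by (intro sum.cong) auto

lemma point_coeffs_condK_eq_schur_reduct:
  fixes s :: "nat \<Rightarrow> complex"
  assumes "n = Suc m" "1 \<le> m" "cmod p < 1" "k \<le> m"
  defines "c \<equiv> 1 - complex_of_real ((cmod p)\<^sup>2)"
  shows "point_coeffs m (\<lambda>k. (s k - cnj (s (n - k)) * p) / c) ((s (n - 1) - cnj (s 1) * p) / c) k
    = schur_reduct m p (point_coeffs n s p) k"
proof (cases "k = 0")
  case True
  then show ?thesis
    using schur_reduct_0[of "point_coeffs n s p" m p] assms(1,3) by (simp add: point_coeffs_def)
next
  case False
  then have "Suc m - k \<noteq> 0" "Suc m - k \<noteq> n" "k \<noteq> n" "n - k = Suc m - k" "n - 1 = m"
    using assms(1,4) by auto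
  moreover have "k = m \<Longrightarrow> Suc m - k = 1"
    by simp
  ultimately show ?thesis
    using False unfolding point_coeffs_def schur_reduct_def c_def by (auto simp: mult.commute)
qed

theorem in_G_iff_condK:
  assumes "2 \<le> n"
  shows "in_G n s p \<longleftrightarrow> condK n s p \<and> cmod p < 1"
proof -
  obtain m where n: "n = Suc m" and "1 \<le> m"
    using assms by (intro that[of "n - 1"]) auto
  define c where "c = 1 - complex_of_real ((cmod p)\<^sup>2)"
  define s' p' where "s' k = (s k - cnj (s (n - k)) * p) / c" and "p' = (s (n - 1) - cnj (s 1) * p) / c"
    for k
  have S: "point_coeffs n s p 0 = 1" "point_coeffs n s p (Suc m) = p"
    unfolding point_coeffs_def n by simp_all
  have reduct: "in_G (n - 1) s' p' \<longleftrightarrow> schur_stable (vieta_poly m (schur_reduct m p (point_coeffs n s p)))"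
    if "cmod p < 1"
  proof -
    have "vieta_poly m (point_coeffs m s' p') = vieta_poly m (schur_reduct m p (point_coeffs n s p))"
      unfolding s'_def p'_def c_def
      by (rule vieta_poly_cong) (rule point_coeffs_condK_eq_schur_reduct[OF n \<open>1 \<le> m\<close> that])
    then show ?thesis
      using in_G_iff_schur_stable[OF \<open>1 \<le> m\<close>, of s' p'] n by simp
  qed
  have "cmod p < 1" if "in_G n s p"
  proof -
    obtain z where "\<forall>i<n. cmod (z i) < 1" "point_coeffs n s p n = esym n z n"
      using \<open>in_G n s p\<close> in_G_iff_esym[of n s p] assms by auto
    with norm_esym_less[of n z n] assms show ?thesis
      by (simp add: point_coeffs_def)
  qed
  moreover have "condK n s p \<longleftrightarrow> cmod p \<noteq> 1 \<and> in_G (n - 1) s' p'"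
    unfolding condK_def s'_def p'_def c_def ..
  ultimately show ?thesis
    using in_G_iff_schur_stable[of n s p] assms reduct
      schur_stable_reduct[OF S] schur_stable_of_reduct[OF S] n by auto
qed

lemma norm_condK_coeff_less:
  assumes "2 \<le> n" "condK n s p" "cmod p < 1" "1 \<le> k" "k \<le> n - 1"
  shows "cmod (s k - cnj (s (n - k)) * p) < (1 - (cmod p)\<^sup>2) * real ((n - 1) choose k)"
proof -
  define c where "c = 1 - (cmod p)\<^sup>2"
  have "0 < c"
    using assms(3) unfolding c_def by (simp add: abs_square_less_1)
  obtain w where w: "\<forall>i<n - 1. cmod (w i) < 1"
    and "\<forall>j\<le>n - 1. point_coeffs (n - 1) (\<lambda>k. (s k - cnj (s (n - k)) * p) / of_real c)
        ((s (n - 1) - cnj (s 1) * p) / of_real c) j = esym (n - 1) w j"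
    using assms(1,2) in_G_iff_esym[of "n - 1"] unfolding condK_def c_def by auto
  then have "(s k - cnj (s (n - k)) * p) / of_real c = esym (n - 1) w k"
    using assms(1,4,5) by (cases "k = n - 1") (auto simp: point_coeffs_def)
  then have "cmod (s k - cnj (s (n - k)) * p) = c * cmod (esym (n - 1) w k)"
    using \<open>0 < c\<close> by (simp add: field_simps norm_mult)
  also have "\<dots> < c * real ((n - 1) choose k)"
    using norm_esym_less[OF w assms(4,5)] \<open>0 < c\<close> by simp
  finally show ?thesis unfolding c_def .
qed

lemma condK_imp_7:
  assumes "2 \<le> n" "condK n s p" "cmod p < 1" "j \<in> {1..n div 2}"
  shows "cmod (s (n - j) - cnj (s j) * p) + cmod (s j - cnj (s (n - j)) * p)
    < real (n choose j) * (1 - (cmod p)\<^sup>2)"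
proof -
  obtain i where "j = Suc i" "i < n - 1"
    using assms(1,4) by (cases j) auto
  then have binom: "real (n choose j) = real ((n - 1) choose (n - j)) + real ((n - 1) choose j)"
    using assms(1) binomial_symmetric[of i "n - 1"] by (cases n) auto
  have "n - (n - j) = j" "1 \<le> n - j" "n - j \<le> n - 1" "1 \<le> j" "j \<le> n - 1"
    using assms(1,4) by auto
  with norm_condK_coeff_less[OF assms(1-3), of j] norm_condK_coeff_less[OF assms(1-3), of "n - j"]
  have "cmod (s j - cnj (s (n - j)) * p) < (1 - (cmod p)\<^sup>2) * real ((n - 1) choose j)"
    "cmod (s (n - j) - cnj (s j) * p) < (1 - (cmod p)\<^sup>2) * real ((n - 1) choose (n - j))"
    by simp_all
  then show ?thesis
    unfolding binom by (simp add: algebra_simps)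
qed

section \<open>Normalising by binomial coefficients\<close>

context
  fixes k :: nat and x y p :: complex
  assumes k: "0 < k"
begin

private lemma scaled_factors:
  "x - cnj y * p = of_nat k * (x / of_nat k - cnj (y / of_nat k) * p)"
  "y - cnj x * p = of_nat k * (y / of_nat k - cnj (x / of_nat k) * p)"
  "x * y - (of_nat k)\<^sup>2 * p = (of_nat k)\<^sup>2 * (x / of_nat k * (y / of_nat k) - p)"
  using k by (simp_all add: field_simps power2_eq_square)

private lemma norm_scaled:
  "cmod x = real k * cmod (x / of_nat k)" "cmod y = real k * cmod (y / of_nat k)"
  "cmod (x - cnj y * p) = real k * cmod (x / of_nat k - cnj (y / of_nat k) * p)"
  "cmod (y - cnj x * p) = real k * cmod (y / of_nat k - cnj (x / of_nat k) * p)"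
  "cmod (x * y - (of_nat k)\<^sup>2 * p) = (real k)\<^sup>2 * cmod (x / of_nat k * (y / of_nat k) - p)"
  unfolding scaled_factors using k by (simp_all add: norm_mult norm_divide norm_power)

private lemma degenerate_scaled: "x * y = (of_nat k)\<^sup>2 * p \<longleftrightarrow> x / of_nat k * (y / of_nat k) = p"
  using k by (auto simp: field_simps power2_eq_square)

lemma in_tetrablock_scaled_iff_2:
  "(\<forall>z w. cmod z \<le> 1 \<longrightarrow> cmod w \<le> 1 \<longrightarrow> of_nat k - x * z - y * w + of_nat k * p * z * w \<noteq> 0)
    \<longleftrightarrow> in_tetrablock (x / of_nat k) (y / of_nat k) p"
proof -
  have "of_nat k - x * z - y * w + of_nat k * p * z * w
      = of_nat k * (1 - x / of_nat k * z - y / of_nat k * w + p * z * w)" for z w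
    using k by (simp add: algebra_simps)
  then show ?thesis
    unfolding in_tetrablock_def using k by simp
qed

lemma in_tetrablock_scaled_iff_3:
  "Psi_Hinf (x / of_nat k) (y / of_nat k) p < 1 \<and> (x * y = (of_nat k)\<^sup>2 * p \<longrightarrow> cmod y < real k)
    \<longleftrightarrow> in_tetrablock (x / of_nat k) (y / of_nat k) p"
  unfolding in_tetrablock_iff_3 degenerate_scaled norm_scaled(2) using k by simp

lemma in_tetrablock_scaled_iff_4:
  "real k * cmod (x - cnj y * p) + cmod (x * y - (of_nat k)\<^sup>2 * p) < (real k)\<^sup>2 - (cmod y)\<^sup>2
    \<longleftrightarrow> in_tetrablock (x / of_nat k) (y / of_nat k) p"
proof -
  have "real k * cmod (x - cnj y * p) + cmod (x * y - (of_nat k)\<^sup>2 * p)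
      = (real k)\<^sup>2 * (cmod (x / of_nat k - cnj (y / of_nat k) * p) + cmod (x / of_nat k * (y / of_nat k) - p))"
    "(real k)\<^sup>2 - (cmod y)\<^sup>2 = (real k)\<^sup>2 * (1 - (cmod (y / of_nat k))\<^sup>2)"
    unfolding norm_scaled by (simp_all add: power2_eq_square algebra_simps)
  then show ?thesis
    unfolding in_tetrablock_iff_4 using k by simp
qed

lemma in_tetrablock_scaled_iff_5:
  "(cmod x)\<^sup>2 - (cmod y)\<^sup>2 + (real k)\<^sup>2 * (cmod p)\<^sup>2 + 2 * real k * cmod (y - cnj x * p) < (real k)\<^sup>2
      \<and> cmod y < real k
    \<longleftrightarrow> in_tetrablock (x / of_nat k) (y / of_nat k) p"
proof -
  have "(cmod x)\<^sup>2 - (cmod y)\<^sup>2 + (real k)\<^sup>2 * (cmod p)\<^sup>2 + 2 * real k * cmod (y - cnj x * p)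
      = (real k)\<^sup>2 * ((cmod (x / of_nat k))\<^sup>2 - (cmod (y / of_nat k))\<^sup>2 + (cmod p)\<^sup>2
          + 2 * cmod (y / of_nat k - cnj (x / of_nat k) * p))"
    unfolding norm_scaled by (simp add: power2_eq_square algebra_simps)
  then show ?thesis
    unfolding in_tetrablock_iff_5 norm_scaled(2) using k
    by (simp add: mult_less_cancel_left_pos[of "(real k)\<^sup>2", where b = 1, simplified])
qed

lemma ineq_6_scaled_iff:
  "(cmod x)\<^sup>2 + (cmod y)\<^sup>2 - (real k)\<^sup>2 * (cmod p)\<^sup>2 + 2 * cmod (x * y - (of_nat k)\<^sup>2 * p) < (real k)\<^sup>2
    \<longleftrightarrow> (cmod (x / of_nat k))\<^sup>2 + (cmod (y / of_nat k))\<^sup>2 - (cmod p)\<^sup>2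
      + 2 * cmod (x / of_nat k * (y / of_nat k) - p) < 1"
proof -
  have "(cmod x)\<^sup>2 + (cmod y)\<^sup>2 - (real k)\<^sup>2 * (cmod p)\<^sup>2 + 2 * cmod (x * y - (of_nat k)\<^sup>2 * p)
      = (real k)\<^sup>2 * ((cmod (x / of_nat k))\<^sup>2 + (cmod (y / of_nat k))\<^sup>2 - (cmod p)\<^sup>2
          + 2 * cmod (x / of_nat k * (y / of_nat k) - p))"
    unfolding norm_scaled by (simp add: power2_eq_square algebra_simps)
  then show ?thesis
    using k by (simp add: mult_less_cancel_left_pos[of "(real k)\<^sup>2", where b = 1, simplified])
qed

lemma in_tetrablock_scaled_iff_7:
  "cmod (y - cnj x * p) + cmod (x - cnj y * p) < real k * (1 - (cmod p)\<^sup>2)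
    \<longleftrightarrow> in_tetrablock (x / of_nat k) (y / of_nat k) p"
  unfolding in_tetrablock_iff_7 norm_scaled using k by (simp flip: distrib_left)

lemma in_tetrablock_scaled_iff_8:
  "(\<exists>B::complex^2^2. mat_opnorm B < 1 \<and> x = of_nat k * B$1$1 \<and> y = of_nat k * B$2$2 \<and> det B = p)
    \<longleftrightarrow> in_tetrablock (x / of_nat k) (y / of_nat k) p"
  unfolding in_tetrablock_iff_8 using k by (auto simp: field_simps)

lemma in_tetrablock_scaled_iff_9:
  "(\<exists>B::complex^2^2. mat_opnorm B < 1 \<and> transpose B = B \<and> x = of_nat k * B$1$1
      \<and> y = of_nat k * B$2$2 \<and> det B = p)
    \<longleftrightarrow> in_tetrablock (x / of_nat k) (y / of_nat k) p"
  unfolding in_tetrablock_iff_9 using k by (auto simp: field_simps)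

end

lemma in_tetrablock_scaled_iff_3':
  assumes "0 < k"
  shows "Psi_Hinf (y / of_nat k) (x / of_nat k) p < 1 \<and> (x * y = (of_nat k)\<^sup>2 * p \<longrightarrow> cmod x < real k)
    \<longleftrightarrow> in_tetrablock (x / of_nat k) (y / of_nat k) p"
  using in_tetrablock_scaled_iff_3[OF assms, of y x p] in_tetrablock_commute by (simp add: mult.commute)

lemma in_tetrablock_scaled_iff_4':
  assumes "0 < k"
  shows "real k * cmod (y - cnj x * p) + cmod (x * y - (of_nat k)\<^sup>2 * p) < (real k)\<^sup>2 - (cmod x)\<^sup>2
    \<longleftrightarrow> in_tetrablock (x / of_nat k) (y / of_nat k) p"
  using in_tetrablock_scaled_iff_4[OF assms, of y x p] in_tetrablock_commute by (simp add: mult.commute)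

lemma in_tetrablock_scaled_iff_5':
  assumes "0 < k"
  shows "(cmod y)\<^sup>2 - (cmod x)\<^sup>2 + (real k)\<^sup>2 * (cmod p)\<^sup>2 + 2 * real k * cmod (x - cnj y * p) < (real k)\<^sup>2
      \<and> cmod x < real k
    \<longleftrightarrow> in_tetrablock (x / of_nat k) (y / of_nat k) p"
  using in_tetrablock_scaled_iff_5[OF assms, of y x p] in_tetrablock_commute by simp

lemma Phi_Hinf_eq_Psi_Hinf:
  assumes "0 < n choose j"
  shows "Phi_Hinf n j y q = Psi_Hinf (y j / of_nat (n choose j)) (y (n - j) / of_nat (n choose j)) q"
proof -
  define k where "k = n choose j"
  have k: "(of_nat k :: complex) \<noteq> 0"
    using assms unfolding k_def by simp
  have degenerate: "y j * y (n - j) = (of_nat k)\<^sup>2 * q \<longleftrightarrow> y j / of_nat k * (y (n - j) / of_nat k) = q"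
    using k by (auto simp: field_simps power2_eq_square)
  show ?thesis
  proof (cases "y j * y (n - j) = (of_nat k)\<^sup>2 * q")
    case True
    then show ?thesis
      using degenerate unfolding Phi_Hinf_def Psi_Hinf_def Phi_defined_def Phi_def k_def[symmetric]
      by (simp add: norm_divide)
  next
    case False
    have "y (n - j) * z = of_nat k \<longleftrightarrow> y (n - j) / of_nat k * z = 1" for z
      using k by (auto simp: field_simps)
    moreover have "(of_nat k * q * z - y j) / (y (n - j) * z - of_nat k)
        = (q * z - y j / of_nat k) / (y (n - j) / of_nat k * z - 1)" for z
      using mult_divide_mult_cancel_left[OF k, of "q * z - y j / of_nat k" "y (n - j) / of_nat k * z - 1"] k
      by (simp add: algebra_simps)
    ultimately show ?thesis
      using False degenerate unfolding Phi_Hinf_def Psi_Hinf_def Phi_defined_def Phi_def k_def[symmetric]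
      by simp
  qed
qed

lemma in_tetrablock_family_iff_2:
  assumes "\<forall>j\<in>J. 0 < k j"
  shows "(\<forall>j\<in>J. \<forall>z w. cmod z \<le> 1 \<longrightarrow> cmod w \<le> 1 \<longrightarrow>
      of_nat (k j) - x j * z - y j * w + of_nat (k j) * p * z * w \<noteq> 0)
    \<longleftrightarrow> (\<forall>j\<in>J. in_tetrablock (x j / of_nat (k j)) (y j / of_nat (k j)) p)"
  using assms in_tetrablock_scaled_iff_2 by blast

lemma in_tetrablock_family_iff_6:
  assumes "J \<noteq> {}" "\<forall>j\<in>J. 0 < k j"
  shows "cmod p < 1 \<and> (\<forall>j\<in>J. (cmod (x j))\<^sup>2 + (cmod (y j))\<^sup>2 - (real (k j))\<^sup>2 * (cmod p)\<^sup>2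
      + 2 * cmod (x j * y j - (of_nat (k j))\<^sup>2 * p) < (real (k j))\<^sup>2)
    \<longleftrightarrow> (\<forall>j\<in>J. in_tetrablock (x j / of_nat (k j)) (y j / of_nat (k j)) p)"
  using assms ineq_6_scaled_iff in_tetrablock_iff_6 by auto

lemma in_tetrablock_family_iff_8:
  assumes "\<forall>j\<in>J. 0 < k j"
  shows "(\<exists>B::'a \<Rightarrow> complex^2^2. \<forall>j\<in>J. mat_opnorm (B j) < 1 \<and> x j = of_nat (k j) * (B j $ 1 $ 1)
      \<and> y j = of_nat (k j) * (B j $ 2 $ 2) \<and> det (B j) = p)
    \<longleftrightarrow> (\<forall>j\<in>J. in_tetrablock (x j / of_nat (k j)) (y j / of_nat (k j)) p)"
proof -
  have "(\<forall>j\<in>J. \<exists>B::complex^2^2. mat_opnorm B < 1 \<and> x j = of_nat (k j) * (B $ 1 $ 1)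
      \<and> y j = of_nat (k j) * (B $ 2 $ 2) \<and> det B = p)
    \<longleftrightarrow> (\<forall>j\<in>J. in_tetrablock (x j / of_nat (k j)) (y j / of_nat (k j)) p)"
    using assms in_tetrablock_scaled_iff_8 by simp
  then show ?thesis by (simp only: bchoice_iff)
qed

lemma in_tetrablock_family_iff_9:
  assumes "\<forall>j\<in>J. 0 < k j"
  shows "(\<exists>B::'a \<Rightarrow> complex^2^2. \<forall>j\<in>J. mat_opnorm (B j) < 1 \<and> transpose (B j) = B j
      \<and> x j = of_nat (k j) * (B j $ 1 $ 1) \<and> y j = of_nat (k j) * (B j $ 2 $ 2) \<and> det (B j) = p)
    \<longleftrightarrow> (\<forall>j\<in>J. in_tetrablock (x j / of_nat (k j)) (y j / of_nat (k j)) p)"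
proof -
  have "(\<forall>j\<in>J. \<exists>B::complex^2^2. mat_opnorm B < 1 \<and> transpose B = B
      \<and> x j = of_nat (k j) * (B $ 1 $ 1) \<and> y j = of_nat (k j) * (B $ 2 $ 2) \<and> det B = p)
    \<longleftrightarrow> (\<forall>j\<in>J. in_tetrablock (x j / of_nat (k j)) (y j / of_nat (k j)) p)"
    using assms in_tetrablock_scaled_iff_9 by simp
  then show ?thesis by (simp only: bchoice_iff)
qed

theorem in_G_iff_tetrablock:
  assumes "2 \<le> n"
  shows "in_G n s p \<longleftrightarrow> condK n s p \<and>
    (\<forall>j\<in>{1..n div 2}. in_tetrablock (s j / of_nat (n choose j)) (s (n - j) / of_nat (n choose j)) p)"
proof -
  have pos: "0 < n choose j" if "j \<in> {1..n div 2}" for j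
    using that by simp presburger
  have "1 \<in> {1..n div 2}"
    using assms by auto
  have "in_G n s p \<longleftrightarrow> condK n s p \<and> cmod p < 1"
    using in_G_iff_condK[OF assms] .
  also have "\<dots> \<longleftrightarrow> condK n s p \<and>
    (\<forall>j\<in>{1..n div 2}. in_tetrablock (s j / of_nat (n choose j)) (s (n - j) / of_nat (n choose j)) p)"
    using condK_imp_7[OF assms] in_tetrablock_scaled_iff_7[OF pos] in_tetrablock_iff_6
      \<open>1 \<in> {1..n div 2}\<close> by blast
  finally show ?thesis .
qed

theorem mainTheorem8:
  fixes n :: nat and s :: "nat \<Rightarrow> complex" and p :: complex
  assumes "n \<ge> 2"
  defines "J \<equiv> {1..n div 2}"
  shows
   "(in_G n s p \<longleftrightarrow>
       condK n s p \<and> (\<forall>j\<in>J. \<forall>z w. cmod z \<le> 1 \<longrightarrow> cmod w \<le> 1 \<longrightarrow>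
          of_nat (n choose j) - s j * z - s (n-j) * w + of_nat (n choose j) * p * z * w \<noteq> 0))
  \<and> (in_G n s p \<longleftrightarrow>
       condK n s p \<and> (\<forall>j\<in>J. Phi_Hinf n j s p < 1 \<and>
          (s j * s (n-j) = (of_nat (n choose j))\<^sup>2 * p \<longrightarrow> cmod (s (n-j)) < real (n choose j))))
  \<and> (in_G n s p \<longleftrightarrow>
       condK n s p \<and> (\<forall>j\<in>J. Phi_Hinf n (n-j) s p < 1 \<and>
          (s j * s (n-j) = (of_nat (n choose j))\<^sup>2 * p \<longrightarrow> cmod (s j) < real (n choose j))))
  \<and> (in_G n s p \<longleftrightarrow>
       condK n s p \<and> (\<forall>j\<in>J.
          real (n choose j) * cmod (s j - cnj (s (n-j)) * p)
          + cmod (s j * s (n-j) - (of_nat (n choose j))\<^sup>2 * p)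
          < (real (n choose j))\<^sup>2 - (cmod (s (n-j)))\<^sup>2))
  \<and> (in_G n s p \<longleftrightarrow>
       condK n s p \<and> (\<forall>j\<in>J.
          real (n choose j) * cmod (s (n-j) - cnj (s j) * p)
          + cmod (s j * s (n-j) - (of_nat (n choose j))\<^sup>2 * p)
          < (real (n choose j))\<^sup>2 - (cmod (s j))\<^sup>2))
  \<and> (in_G n s p \<longleftrightarrow>
       condK n s p \<and> (\<forall>j\<in>J.
          (cmod (s j))\<^sup>2 - (cmod (s (n-j)))\<^sup>2 + (real (n choose j))\<^sup>2 * (cmod p)\<^sup>2
          + 2 * real (n choose j) * cmod (s (n-j) - cnj (s j) * p) < (real (n choose j))\<^sup>2
          \<and> cmod (s (n-j)) < real (n choose j)))
  \<and> (in_G n s p \<longleftrightarrow>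
       condK n s p \<and> (\<forall>j\<in>J.
          (cmod (s (n-j)))\<^sup>2 - (cmod (s j))\<^sup>2 + (real (n choose j))\<^sup>2 * (cmod p)\<^sup>2
          + 2 * real (n choose j) * cmod (s j - cnj (s (n-j)) * p) < (real (n choose j))\<^sup>2
          \<and> cmod (s j) < real (n choose j)))
  \<and> (in_G n s p \<longleftrightarrow>
       condK n s p \<and> cmod p < 1 \<and> (\<forall>j\<in>J.
          (cmod (s j))\<^sup>2 + (cmod (s (n-j)))\<^sup>2 - (real (n choose j))\<^sup>2 * (cmod p)\<^sup>2
          + 2 * cmod (s j * s (n-j) - (of_nat (n choose j))\<^sup>2 * p) < (real (n choose j))\<^sup>2))
  \<and> (in_G n s p \<longleftrightarrow>
       condK n s p \<and> (\<forall>j\<in>J.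
          cmod (s (n-j) - cnj (s j) * p) + cmod (s j - cnj (s (n-j)) * p)
          < real (n choose j) * (1 - (cmod p)\<^sup>2)))
  \<and> (in_G n s p \<longleftrightarrow>
       condK n s p \<and> (\<exists>B :: nat \<Rightarrow> complex^2^2. \<forall>j\<in>J.
          mat_opnorm (B j) < 1 \<and> s j = of_nat (n choose j) * (B j $ 1 $ 1)
          \<and> s (n-j) = of_nat (n choose j) * (B j $ 2 $ 2) \<and> det (B j) = p))
  \<and> (in_G n s p \<longleftrightarrow>
       condK n s p \<and> (\<exists>B :: nat \<Rightarrow> complex^2^2. \<forall>j\<in>J.
          mat_opnorm (B j) < 1 \<and> transpose (B j) = B j \<and> s j = of_nat (n choose j) * (B j $ 1 $ 1)
          \<and> s (n-j) = of_nat (n choose j) * (B j $ 2 $ 2) \<and> det (B j) = p))"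
proof -
  have pos: "\<And>j. j \<in> J \<Longrightarrow> 0 < n choose j"
    unfolding J_def by simp presburger
  then have "\<forall>j\<in>J. 0 < n choose j"
    by blast
  have sym: "\<And>j. j \<in> J \<Longrightarrow> n choose (n - j) = n choose j" "\<And>j. j \<in> J \<Longrightarrow> n - (n - j) = j"
    unfolding J_def by (auto intro: binomial_symmetric[symmetric])
  have "J \<noteq> {}"
    using assms(1) unfolding J_def by auto
  show ?thesis
    unfolding in_G_iff_tetrablock[OF assms(1), folded J_def]
      in_tetrablock_family_iff_2[OF \<open>\<forall>j\<in>J. 0 < n choose j\<close>]
      in_tetrablock_family_iff_6[OF \<open>J \<noteq> {}\<close> \<open>\<forall>j\<in>J. 0 < n choose j\<close>]
      in_tetrablock_family_iff_8[OF \<open>\<forall>j\<in>J. 0 < n choose j\<close>]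
      in_tetrablock_family_iff_9[OF \<open>\<forall>j\<in>J. 0 < n choose j\<close>]
    using pos sym
    by (simp add: Phi_Hinf_eq_Psi_Hinf in_tetrablock_scaled_iff_3 in_tetrablock_scaled_iff_3'
      in_tetrablock_scaled_iff_4 in_tetrablock_scaled_iff_4' in_tetrablock_scaled_iff_5
      in_tetrablock_scaled_iff_5' in_tetrablock_scaled_iff_7 in_tetrablock_commute[of "s (n - _) / _"])
qed

end
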